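(* Assume (A1)–(A3) below (no relation between $c$ and $\eta$ is required). Then for all $R,\rho>0$ there is a constant $C=C(\rho,R,d)$ (also allowed to depend on $\alpha,\eta$) such that for all $N$, all $x\in B_{R,\rho}$, all $i\in\Gamma_N$ and all $t\ge0$, $$\mathbb E_x|X^N_i(t)|\le C(1+|i|^\rho)(1+t)e^{(1+\eta)t}.$$
   Context: Let $d\ge1$, $1<\alpha\le2$, $|i|=\sum_k|i_k|$, $|i-j|=\sum_k|i_k-j_k|$; $\{Z_i\}_{i\in\mathbb Z^d}$ i.i.d. one-dimensional symmetric $\alpha$-stable Lévy processes. $B_{R,\rho}=\{x\in\mathbb R^{\mathbb Z^d}:|x_i|\le R(|i|+1)^\rho\ \forall i\}$, $\mathbb B=\bigcup_{R,\rho>0}B_{R,\rho}$ with the product topology. (A1) each $I_i:\mathbb B\to\mathbb R$ is continuous for the product topology, $I_i(0)=0$, $|I_i(x)-I_i(y)|\le\sum_j a_{ji}|x_j-y_j|$ with $0\le a_{ij}\le e^{-|i-j|}$. (A2) each $J_i:\mathbb R\to\mathbb R$ is differentiable, $J_i'\le0$, $J_i(0)=0$, $|J_i(x)|\le\kappa'(|x|^\kappa+1)$. (A3) $\eta:=(\sup_j\sum_ia_{ij})\vee(\sup_i\sum_ja_{ij})<\infty$, $c:=\inf_{i,y}(-J_i'(y))$. $\Gamma_N=[-N,N]^d\cap\mathbb Z^d$, $I^N_i(x^N)=I_i(x^N,0)$, and $X^N$ is the solution of $dX^N_i=[J_i(X^N_i)+I^N_i(X^N)]dt+dZ_i$, $X^N_i(0)=x_i$,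 $i\in\Gamma_N$; $\mathbb E_x$ denotes expectation for this initial datum. *)

theory Defs
  imports "HOL-Probability.Probability"
begin

text \<open>Sites of the lattice Z^d are functions 'd => int for a finite type 'd (d = CARD('d)).\<close>

definition l1norm :: "('d::finite \<Rightarrow> int) \<Rightarrow> real" where
  "l1norm i = (\<Sum>k\<in>UNIV. real_of_int \<bar>i k\<bar>)"

definition l1dist :: "('d::finite \<Rightarrow> int) \<Rightarrow> ('d \<Rightarrow> int) \<Rightarrow> real" where
  "l1dist i j = (\<Sum>k\<in>UNIV. real_of_int \<bar>i k - j k\<bar>)"

definition GammaN :: "nat \<Rightarrow> ('d::finite \<Rightarrow> int) set" where
  "GammaN N = {i. \<forall>k. \<bar>i k\<bar> \<le> int N}"

definition BRrho :: "real \<Rightarrow> real \<Rightarrow> (('d::finite \<Rightarrow> int) \<Rightarrow> real) set" where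
  "BRrho R \<rho> = {x. \<forall>i. \<bar>x i\<bar> \<le> R * (l1norm i + 1) powr \<rho>}"

definition BB :: "(('d::finite \<Rightarrow> int) \<Rightarrow> real) set" where
  "BB = (\<Union>R\<in>{0<..}. \<Union>\<rho>\<in>{0<..}. BRrho R \<rho>)"

text \<open>(A1); the topology on functions is the product topology (Function_Topology).\<close>
definition A1 :: "(('d::finite \<Rightarrow> int) \<Rightarrow> ('d \<Rightarrow> int) \<Rightarrow> real)
    \<Rightarrow> (('d \<Rightarrow> int) \<Rightarrow> (('d \<Rightarrow> int) \<Rightarrow> real) \<Rightarrow> real) \<Rightarrow> bool" where
  "A1 a I \<longleftrightarrow>
     (\<forall>i j. 0 \<le> a i j \<and> a i j \<le> exp (- l1dist i j)) \<and>
     (\<forall>i. continuous_on BB (I i) \<and> I i (\<lambda>_. 0) = 0 \<and>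
        (\<forall>x\<in>BB. \<forall>y\<in>BB. \<bar>I i x - I i y\<bar> \<le> (\<Sum>\<^sub>\<infinity>j. a j i * \<bar>x j - y j\<bar>)))"

definition A2 :: "(('d::finite \<Rightarrow> int) \<Rightarrow> real \<Rightarrow> real) \<Rightarrow> real \<Rightarrow> real \<Rightarrow> bool" where
  "A2 J \<kappa> \<kappa>' \<longleftrightarrow>
     (\<forall>i. (\<forall>y. \<exists>D. (J i has_real_derivative D) (at y) \<and> D \<le> 0) \<and>
          J i 0 = 0 \<and>
          (\<forall>y. \<bar>J i y\<bar> \<le> \<kappa>' * (\<bar>y\<bar> powr \<kappa> + 1)))"

definition eta :: "(('d::finite \<Rightarrow> int) \<Rightarrow> ('d \<Rightarrow> int) \<Rightarrow> real) \<Rightarrow> real" where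
  "eta a = max (SUP j. \<Sum>\<^sub>\<infinity>i. a i j) (SUP i. \<Sum>\<^sub>\<infinity>j. a i j)"

text \<open>An i.i.d. family of one-dimensional symmetric alpha-stable Levy processes
  (normalised: E exp(iu Z(t)) = exp(-t|u|^alpha)), indexed by Z^d, on the probability space M.\<close>
definition stable_family :: "'w measure \<Rightarrow> real \<Rightarrow> (('d::finite \<Rightarrow> int) \<Rightarrow> real \<Rightarrow> 'w \<Rightarrow> real) \<Rightarrow> bool" where
  "stable_family M \<alpha> Z \<longleftrightarrow>
     prob_space M \<and>
     (\<forall>i t. Z i t \<in> borel_measurable M) \<and>
     (\<forall>i. \<forall>\<omega>\<in>space M. Z i 0 \<omega> = 0) \<and>
     (\<forall>i. AE \<omega> in M. \<forall>t\<ge>0. continuous (at_right t) (\<lambda>s. Z i s \<omega>) \<and>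
                          (t > 0 \<longrightarrow> (\<exists>l. ((\<lambda>s. Z i s \<omega>) \<longlongrightarrow> l) (at_left t)))) \<and>
     (\<forall>i s t. 0 \<le> s \<and> s \<le> t \<longrightarrow>
        char (distr M borel (\<lambda>\<omega>. Z i t \<omega> - Z i s \<omega>))
          = (\<lambda>u. complex_of_real (exp (- (t - s) * \<bar>u\<bar> powr \<alpha>)))) \<and>
     (\<forall>(F::('d \<Rightarrow> int) set) (n::nat) (tt::nat \<Rightarrow> real).
        finite F \<and> 0 \<le> tt 0 \<and> incseq tt \<longrightarrow>
        prob_space.indep_vars M (\<lambda>_. borel)
          (\<lambda>(i, k) \<omega>. Z i (tt (Suc k)) \<omega> - Z i (tt k) \<omega>) (F \<times> {..<n}))"

definition solves_N :: "'w measure \<Rightarrow> (('d::finite \<Rightarrow> int) \<Rightarrow> real \<Rightarrow> 'w \<Rightarrow> real)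
    \<Rightarrow> (('d \<Rightarrow> int) \<Rightarrow> real \<Rightarrow> real) \<Rightarrow> (('d \<Rightarrow> int) \<Rightarrow> (('d \<Rightarrow> int) \<Rightarrow> real) \<Rightarrow> real)
    \<Rightarrow> nat \<Rightarrow> (('d \<Rightarrow> int) \<Rightarrow> real) \<Rightarrow> (('d \<Rightarrow> int) \<Rightarrow> real \<Rightarrow> 'w \<Rightarrow> real) \<Rightarrow> bool" where
  "solves_N M Z J I N x X \<longleftrightarrow>
     (\<forall>i\<in>GammaN N. \<forall>t. X i t \<in> borel_measurable M) \<and>
     (AE \<omega> in M. \<forall>i\<in>GammaN N. \<forall>t\<ge>0.
        ((\<lambda>s. J i (X i s \<omega>) + I i (\<lambda>j. if j \<in> GammaN N then X j s \<omega> else 0))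
           has_integral (X i t \<omega> - x i - Z i t \<omega>)) {0..t})"

end

theory Submission
  imports Defs
begin

text \<open>
  The argument is a comparison principle driven by a polynomial weight.
  (1) Lattice geometry: since a_{ji} <= e^{-|i-j|}, the weight w_j = (L + |j|)^rho is,
      for L large (depending only on rho and d), almost an eigenvector of the interaction:
      sum_j a_{ji} w_j <= (eta + 1/2) w_i.
  (2) Deterministic comparison: along a path on which every noise Z_j stays below s_j on
      [0,T], the drift has the sign structure J_j(x) x <= 0 and |I_j| <= sum_k a_{kj} |x_k|,
      so |X_j(T)| <= e^{lam T} V_j for every vector V with V_j >= |x_j| + 2 s_j and
      sum_k a_{kj} V_k <= lam V_j; we take lam = 1 + eta and V the Neumann series
      sum_n (a/lam)^n B of B_j = |x_j| + 2 s_j.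
  (3) Noise: from the characteristic function, P(|Z_i(t) - Z_i(s)| >= r) <= C (t - s) / r^alpha;
      the Levy reflection inequality and a dyadic discretisation give
      E sup_{[0,T]} |Z_i| <= 1 + K_alpha T, finite because alpha > 1.
  (4) Taking expectations in (2), the Neumann series is dominated through the weight of (1)
      by a geometric series with ratio (eta + 1/2) / (1 + eta) < 1.
  The sections below follow this plan; truncated_moment_bound assembles (1)-(4) for fixed L,
  and the final theorem only chooses L and collects the constants.
\<close>

section \<open>Lattice geometry and the polynomial weight\<close>

lemma geometric_finite_sum_le:
  fixes r :: real assumes "0 \<le> r" "r < 1" "finite K"
  shows "(\<Sum>k\<in>K. r ^ k) \<le> 1 / (1 - r)"
proof -
  have "(\<Sum>k\<in>K. r ^ k) \<le> (\<Sum>k. r ^ k)"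
    using assms by (intro sum_le_suminf) (auto intro: summable_geometric)
  also have "\<dots> = 1 / (1 - r)" using assms by (simp add: suminf_geometric)
  finally show ?thesis .
qed

text \<open>Summing e^{-|n-a|/2} over any finite set of integers: two geometric tails.\<close>
lemma sum_exp_int_half:
  fixes F :: "int set" and a :: int assumes "finite F"
  shows "(\<Sum>n\<in>F. exp (- real_of_int \<bar>n - a\<bar> / 2)) \<le> 2 / (1 - exp (-1/2))"
proof -
  define r :: real where "r = exp (-1/2)"
  have r: "0 \<le> r" "r < 1" unfolding r_def by auto
  have exp_pow: "exp (- real_of_int \<bar>n - a\<bar> / 2) = r ^ nat \<bar>n - a\<bar>" for n
  proof -
    have "exp (- real_of_int \<bar>n - a\<bar> / 2) = exp (real (nat \<bar>n - a\<bar>) * (-1/2))" by simp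
    also have "\<dots> = r ^ nat \<bar>n - a\<bar>" unfolding r_def by (rule exp_of_nat_mult)
    finally show ?thesis .
  qed
  have one_side: "(\<Sum>n\<in>F \<inter> P. exp (- real_of_int \<bar>n - a\<bar> / 2)) \<le> 1 / (1 - r)"
    if inj: "inj_on (\<lambda>n. nat \<bar>n - a\<bar>) (F \<inter> P)" for P
  proof -
    have "(\<Sum>n\<in>F \<inter> P. exp (- real_of_int \<bar>n - a\<bar> / 2)) = (\<Sum>k\<in>(\<lambda>n. nat \<bar>n - a\<bar>) ` (F \<inter> P). r ^ k)"
      unfolding exp_pow sum.reindex[OF inj] by (simp add: o_def)
    also have "\<dots> \<le> 1 / (1 - r)" using r assms by (intro geometric_finite_sum_le) auto
    finally show ?thesis .
  qed
  have "(\<Sum>n\<in>F. exp (- real_of_int \<bar>n - a\<bar> / 2))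
      = (\<Sum>n\<in>F \<inter> {a..}. exp (- real_of_int \<bar>n - a\<bar> / 2)) + (\<Sum>n\<in>F \<inter> {..<a}. exp (- real_of_int \<bar>n - a\<bar> / 2))"
    using assms by (subst sum.union_disjoint[symmetric]) (auto intro: sum.cong)
  also have "\<dots> \<le> 1 / (1 - r) + 1 / (1 - r)"
    by (intro add_mono one_side) (auto simp: inj_on_def)
  finally show ?thesis unfolding r_def by simp
qed

text \<open>The one-dimensional bound of sum_exp_int_half; the lattice sum over Z^d is bounded by its
  d-th power.\<close>
definition lattice_const :: real where "lattice_const = 2 / (1 - exp (-1/2))"

lemma lattice_const_pos: "lattice_const > 0"
  unfolding lattice_const_def by simp

text \<open>Uniform summability of e^{-|i-j|/2} over Z^d: the sum factorises over the coordinates.\<close>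
lemma sum_exp_l1dist_half:
  fixes F :: "('d::finite \<Rightarrow> int) set" and i :: "'d \<Rightarrow> int"
  assumes "finite F"
  shows "(\<Sum>j\<in>F. exp (- l1dist i j / 2)) \<le> lattice_const ^ CARD('d)"
proof -
  define B where "B c = (\<lambda>j. j c) ` F" for c :: 'd
  have finB: "finite (B c)" for c unfolding B_def using assms by simp
  have sub: "F \<subseteq> PiE UNIV B" unfolding B_def by (auto simp: PiE_def Pi_def extensional_def)
  have factor: "exp (- l1dist i j / 2) = (\<Prod>c\<in>UNIV. exp (- real_of_int \<bar>j c - i c\<bar> / 2))" for j :: "'d \<Rightarrow> int"
  proof -
    have "- l1dist i j / 2 = (\<Sum>c\<in>UNIV. - real_of_int \<bar>j c - i c\<bar> / 2)"
      unfolding l1dist_def by (simp add: sum_negf sum_divide_distrib abs_minus_commute)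
    then show ?thesis by (simp add: exp_sum)
  qed
  have "(\<Sum>j\<in>F. exp (- l1dist i j / 2)) \<le> (\<Sum>j\<in>PiE UNIV B. exp (- l1dist i j / 2))"
    using finB by (intro sum_mono2[OF _ sub]) (auto simp: finite_PiE)
  also have "\<dots> = (\<Prod>c\<in>UNIV. \<Sum>n\<in>B c. exp (- real_of_int \<bar>n - i c\<bar> / 2))"
    unfolding factor by (rule prod_sum_PiE[symmetric]) (auto simp: finB)
  also have "\<dots> \<le> (\<Prod>c\<in>(UNIV::'d set). lattice_const)"
    using sum_exp_int_half[OF finB] unfolding lattice_const_def by (intro prod_mono) (auto simp: sum_nonneg)
  finally show ?thesis by simp
qed

lemma l1dist_sym: "l1dist i j = l1dist j i"
  unfolding l1dist_def by (simp add: abs_minus_commute)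

lemma l1dist_nonneg: "l1dist i j \<ge> 0"
  unfolding l1dist_def by (simp add: sum_nonneg)

lemma l1norm_nonneg: "l1norm i \<ge> 0"
  unfolding l1norm_def by (simp add: sum_nonneg)

lemma l1norm_triangle: "l1norm j \<le> l1norm i + l1dist i j"
proof -
  have "l1norm j \<le> (\<Sum>k\<in>UNIV. real_of_int \<bar>i k\<bar> + real_of_int \<bar>i k - j k\<bar>)"
    unfolding l1norm_def by (rule sum_mono) linarith
  then show ?thesis by (simp add: l1norm_def l1dist_def sum.distrib)
qed

lemma A1_coeff: assumes "A1 a I" shows "0 \<le> a i j" "a i j \<le> exp (- l1dist i j)"
  using assms unfolding A1_def by auto

text \<open>Under (A1), every column sum of (a_{ji}) over a finite set is bounded by eta(a).
  The column sums are uniformly bounded, so the supremum defining eta(a) is a real bound.\<close>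
lemma A1_column_sum_le_eta:
  assumes A: "A1 a I" and F: "finite F" shows "(\<Sum>j\<in>F. a j i) \<le> eta a"
proof -
  have col_le: "a j i' \<le> exp (- l1dist i' j / 2)" for j i'
    using A1_coeff(2)[OF A, of j i'] l1dist_nonneg[of i' j] by (simp add: l1dist_sym order_trans)
  have summable: "(\<lambda>j. a j i') summable_on UNIV" for i'
  proof (rule summable_on_comparison_test)
    show "(\<lambda>j. exp (- l1dist i' j / 2)) summable_on UNIV"
      using sum_exp_l1dist_half[of _ i']
      by (intro nonneg_bdd_above_summable_on bdd_aboveI[of _ "lattice_const ^ CARD(_)"]) auto
  qed (use col_le A1_coeff(1)[OF A] in auto)
  have bounded: "(\<Sum>\<^sub>\<infinity>j. a j i') \<le> lattice_const ^ CARD('a)" for i' :: "'a::finite \<Rightarrow> int"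
  proof (rule infsum_le_finite_sums[OF summable])
    fix F' :: "('a \<Rightarrow> int) set" assume "finite F'"
    have "(\<Sum>j\<in>F'. a j i') \<le> (\<Sum>j\<in>F'. exp (- l1dist i' j / 2))" by (intro sum_mono col_le)
    also have "\<dots> \<le> lattice_const ^ CARD('a)" by (rule sum_exp_l1dist_half[OF \<open>finite F'\<close>])
    finally show "(\<Sum>j\<in>F'. a j i') \<le> lattice_const ^ CARD('a)" .
  qed
  have "(\<Sum>j\<in>F. a j i) \<le> (\<Sum>\<^sub>\<infinity>j. a j i)"
    using A1_coeff(1)[OF A] by (intro finite_sum_le_infsum[OF summable F]) auto
  also have "\<dots> \<le> (SUP j. \<Sum>\<^sub>\<infinity>i. a i j)"
    by (rule cSUP_upper[where f="\<lambda>j. \<Sum>\<^sub>\<infinity>i. a i j"]) (use bounded in \<open>auto intro!: bdd_aboveI2\<close>)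
  also have "\<dots> \<le> eta a" unfolding eta_def by simp
  finally show ?thesis .
qed

lemma A1_eta_nonneg: assumes "A1 a I" shows "eta a \<ge> 0"
  using A1_column_sum_le_eta[OF assms, of "{}"] by simp

text \<open>A first-order bound for (1+y)^rho, from ln(1+y) <= y.\<close>
lemma powr_one_plus_le:
  fixes y \<rho> :: real assumes "y \<ge> 0" "\<rho> \<ge> 0"
  shows "(1 + y) powr \<rho> \<le> 1 + \<rho> * y * (1 + y) powr \<rho>"
proof -
  have "(1 + y) powr (- \<rho>) = exp (- \<rho> * ln (1 + y))" using assms by (simp add: powr_def)
  also have "\<dots> \<ge> 1 - \<rho> * ln (1 + y)" using exp_ge_add_one_self[of "- \<rho> * ln (1 + y)"] by simp
  finally have "(1 + y) powr (- \<rho>) \<ge> 1 - \<rho> * y"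
    using mult_left_mono[OF ln_add_one_self_le_self[OF assms(1)] assms(2)] by linarith
  then have "(1 + y) powr \<rho> * (1 + y) powr (- \<rho>) \<ge> (1 + y) powr \<rho> * (1 - \<rho> * y)"
    by (rule mult_left_mono) simp
  moreover have "(1 + y) powr \<rho> * (1 + y) powr (- \<rho>) = 1"
    using assms by (simp add: powr_add[symmetric])
  ultimately show ?thesis by (simp add: algebra_simps)
qed

lemma exp_half_poly_bounded:
  fixes \<rho> :: real
  shows "\<exists>C. \<forall>d\<ge>0. exp (- d / 2) * d * (1 + d) powr \<rho> \<le> C"
proof -
  define g where "g d = exp (- d / 2) * d * (1 + d) powr \<rho>" for d :: real
  have "(g \<longlongrightarrow> 0) at_top" unfolding g_def by real_asymp
  then have "eventually (\<lambda>d. g d < 1) at_top" by (rule order_tendstoD) simp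
  then obtain D where D: "\<And>d. d \<ge> D \<Longrightarrow> g d < 1" by (auto simp: eventually_at_top_linorder)
  have "continuous_on {0..max D 0} g" unfolding g_def by (intro continuous_intros) auto
  then have "bounded (g ` {0..max D 0})" by (intro compact_imp_bounded compact_continuous_image) auto
  then obtain C where C: "\<And>y. y \<in> g ` {0..max D 0} \<Longrightarrow> norm y \<le> C" unfolding bounded_iff by blast
  have "g d \<le> max C 1" if "d \<ge> 0" for d
  proof (cases "d \<le> max D 0")
    case True
    then show ?thesis using C[of "g d"] that by auto
  next
    case False
    then have "g d < 1" using D[of d] by simp
    then show ?thesis by simp
  qed
  then show ?thesis unfolding g_def by blast
qed

text \<open>One term of the weighted column sum: moving from site i to site j at distance d changes
  the weight by a factor (1 + d/L)^rho, and the excess is paid for by e^{-d}.\<close>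
lemma weight_increment:
  fixes L d \<rho> C ni nj aij :: real
  assumes L: "L \<ge> 1" and \<rho>: "\<rho> > 0" and d: "d \<ge> 0" and ni: "ni \<ge> 0" and nj: "nj \<ge> 0"
    and tri: "nj \<le> ni + d" and a: "0 \<le> aij" "aij \<le> exp (- d)"
    and C: "exp (- d / 2) * d * (1 + d) powr \<rho> \<le> C"
  shows "aij * (L + nj) powr \<rho> \<le> (L + ni) powr \<rho> * (aij + \<rho> / L * C * exp (- d / 2))"
proof -
  define W where "W = (L + ni) powr \<rho>"
  have W: "W \<ge> 0" unfolding W_def by simp
  have "(L + ni) * (1 + d / L) = L + ni + d + ni * d / L" using L by (simp add: field_simps)
  moreover have "ni * d / L \<ge> 0" using ni d L by simp
  ultimately have "L + nj \<le> (L + ni) * (1 + d / L)" using tri by linarith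
  then have "(L + nj) powr \<rho> \<le> ((L + ni) * (1 + d / L)) powr \<rho>"
    using L nj \<rho> by (intro powr_mono2) auto
  also have "\<dots> = W * (1 + d / L) powr \<rho>" unfolding W_def using L ni d by (simp add: powr_mult)
  finally have step1: "(L + nj) powr \<rho> \<le> W * (1 + d / L) powr \<rho>" .
  have "(1 + d / L) powr \<rho> \<le> 1 + \<rho> * (d / L) * (1 + d / L) powr \<rho>"
    using d L \<rho> by (intro powr_one_plus_le) auto
  also have "\<dots> \<le> 1 + \<rho> * (d / L) * (1 + d) powr \<rho>"
  proof -
    have "d / L \<le> d" using d L by (simp add: divide_le_eq mult_left_mono[of 1 L d, simplified])
    then have "(1 + d / L) powr \<rho> \<le> (1 + d) powr \<rho>" using d L \<rho> by (intro powr_mono2) auto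
    then show ?thesis using d L \<rho> by (intro add_left_mono mult_left_mono) auto
  qed
  also have "\<dots> = 1 + \<rho> / L * (d * (1 + d) powr \<rho>)" by simp
  finally have weight: "(L + nj) powr \<rho> \<le> W * (1 + \<rho> / L * (d * (1 + d) powr \<rho>))"
    using step1 W by (meson mult_left_mono order_trans)
  have "exp (- d) = exp (- d / 2) * exp (- d / 2)" by (simp flip: exp_add)
  then have "aij * (d * (1 + d) powr \<rho>) \<le> exp (- d / 2) * exp (- d / 2) * (d * (1 + d) powr \<rho>)"
    using a d by (metis mult_right_mono powr_ge_zero zero_le_mult_iff)
  also have "\<dots> = exp (- d / 2) * (exp (- d / 2) * d * (1 + d) powr \<rho>)" by (simp add: mult.assoc)
  also have "\<dots> \<le> exp (- d / 2) * C" using C by simp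
  finally have decay: "aij * (d * (1 + d) powr \<rho>) \<le> C * exp (- d / 2)" by (simp add: mult.commute)
  have "aij * (L + nj) powr \<rho> \<le> aij * (W * (1 + \<rho> / L * (d * (1 + d) powr \<rho>)))"
    using weight a by (intro mult_left_mono) auto
  also have "\<dots> = W * (aij + \<rho> / L * (aij * (d * (1 + d) powr \<rho>)))" by (simp add: algebra_simps)
  also have "\<dots> \<le> W * (aij + \<rho> / L * (C * exp (- d / 2)))"
    using decay W L \<rho> by (intro mult_left_mono add_left_mono) auto
  finally show ?thesis unfolding W_def by (simp add: algebra_simps)
qed

lemma A1_polynomial_weight:
  fixes \<rho> :: real assumes \<rho>: "\<rho> > 0"
  shows "\<exists>L\<ge>1. \<forall>(a :: ('d::finite \<Rightarrow> int) \<Rightarrow> ('d \<Rightarrow> int) \<Rightarrow> real) I. A1 a I \<longrightarrow>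
    (\<forall>F i. finite F \<longrightarrow> (\<Sum>j\<in>F. a j i * (L + l1norm j) powr \<rho>) \<le> (eta a + 1/2) * (L + l1norm i) powr \<rho>)"
proof -
  obtain C where C: "\<And>d. d \<ge> 0 \<Longrightarrow> exp (- d / 2) * d * (1 + d) powr \<rho> \<le> C"
    using exp_half_poly_bounded[of \<rho>] by blast
  have C0: "C \<ge> 0" using C[of 0] by simp
  define K where "K = C * lattice_const ^ CARD('d)"
  have K: "K \<ge> 0" unfolding K_def using C0 lattice_const_pos by simp
  define L where "L = max 1 (2 * \<rho> * K)"
  have L: "L \<ge> 1" unfolding L_def by simp
  have "2 * (\<rho> * K) \<le> L" unfolding L_def by simp
  then have L_half: "\<rho> * K / L \<le> 1/2" using L by (simp add: field_simps)
  show ?thesis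
  proof (intro exI[of _ L] conjI L allI impI)
    fix a :: "('d \<Rightarrow> int) \<Rightarrow> ('d \<Rightarrow> int) \<Rightarrow> real" and I
      and F :: "('d \<Rightarrow> int) set" and i :: "'d \<Rightarrow> int"
    assume A: "A1 a I" and F: "finite F"
    define W where "W = (L + l1norm i) powr \<rho>"
    have "(\<Sum>j\<in>F. a j i * (L + l1norm j) powr \<rho>) \<le> (\<Sum>j\<in>F. W * (a j i + \<rho> / L * C * exp (- l1dist i j / 2)))"
      unfolding W_def using A1_coeff[OF A, of _ i] L \<rho>
      by (intro sum_mono weight_increment C l1dist_nonneg l1norm_nonneg l1norm_triangle)
         (auto simp: l1dist_sym)
    also have "\<dots> = W * ((\<Sum>j\<in>F. a j i) + \<rho> / L * C * (\<Sum>j\<in>F. exp (- l1dist i j / 2)))"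
      by (simp add: sum.distrib sum_distrib_left[symmetric] sum_divide_distrib[symmetric])
    also have "\<dots> \<le> W * (eta a + \<rho> / L * C * lattice_const ^ CARD('d))"
      unfolding W_def using A1_column_sum_le_eta[OF A F] sum_exp_l1dist_half[OF F, of i] C0 \<rho> L
      by (intro mult_left_mono add_mono) auto
    also have "\<dots> \<le> W * (eta a + 1/2)"
      using L_half unfolding W_def K_def by (intro mult_left_mono) (auto simp: field_simps)
    finally show "(\<Sum>j\<in>F. a j i * (L + l1norm j) powr \<rho>) \<le> (eta a + 1/2) * (L + l1norm i) powr \<rho>"
      unfolding W_def by (simp add: mult.commute)
  qed
qed

section \<open>A deterministic comparison principle\<close>

lemma continuous_on_left_neighbourhood_gt:
  fixes f :: "real \<Rightarrow> real"
  assumes "continuous_on {a..b} f" "a < b" "f b > c"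
  shows "\<exists>\<sigma>\<in>{a..<b}. \<forall>t\<in>{\<sigma>..b}. f t > c"
proof -
  have "b \<in> {a..b}" using assms by auto
  with assms(1) obtain d where d: "d > 0"
      "\<And>t. t \<in> {a..b} \<Longrightarrow> dist t b < d \<Longrightarrow> dist (f t) (f b) < f b - c"
    unfolding continuous_on_iff using assms(3) by (metis diff_gt_0_iff_gt)
  define \<sigma> where "\<sigma> = max a (b - d / 2)"
  have "\<sigma> \<in> {a..<b}" unfolding \<sigma>_def using d assms by auto
  moreover have "f t > c" if "t \<in> {\<sigma>..b}" for t
    using d(2)[of t] that d(1) unfolding \<sigma>_def by (auto simp: dist_real_def)
  ultimately show ?thesis by blast
qed

lemma first_crossing:
  fixes f :: "'i \<Rightarrow> real \<Rightarrow> real"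
  assumes fin: "finite G" and cont: "\<And>k. k \<in> G \<Longrightarrow> continuous_on {0..T} (f k)"
    and start: "\<And>k. k \<in> G \<Longrightarrow> f k 0 < 0"
    and cross: "j \<in> G" "t \<in> {0..T}" "f j t \<ge> 0"
  obtains \<tau> k0 where "\<tau> \<in> {0<..T}" "k0 \<in> G" "f k0 \<tau> = 0"
    "\<And>k t'. k \<in> G \<Longrightarrow> t' \<in> {0..<\<tau>} \<Longrightarrow> f k t' < 0" "\<And>k. k \<in> G \<Longrightarrow> f k \<tau> \<le> 0"
proof -
  define Bad where "Bad = (\<Union>k\<in>G. {0..T} \<inter> f k -` {0..})"
  have closed: "closed Bad" unfolding Bad_def using fin cont
    by (intro closed_UN ballI continuous_closed_preimage) auto
  have bdd: "bdd_below Bad" unfolding Bad_def by (auto intro!: bdd_belowI[of _ 0])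
  define \<tau> where "\<tau> = Inf Bad"
  have "t \<in> Bad" unfolding Bad_def using cross by auto
  then have "\<tau> \<in> Bad" unfolding \<tau>_def using closed bdd by (intro closed_contains_Inf) auto
  then obtain k0 where k0: "k0 \<in> G" "\<tau> \<in> {0..T}" "f k0 \<tau> \<ge> 0" unfolding Bad_def by auto
  have before: "f k t' < 0" if "k \<in> G" "t' \<in> {0..<\<tau>}" for k t'
  proof (rule ccontr)
    assume "\<not> f k t' < 0"
    then have "t' \<in> Bad" unfolding Bad_def using that k0(2) by (auto simp: not_less intro!: bexI[of _ k])
    then have "\<tau> \<le> t'" unfolding \<tau>_def using bdd by (rule cInf_lower)
    then show False using that by auto
  qed
  have pos: "\<tau> > 0" using k0 start[OF k0(1)] by (cases "\<tau> = 0") auto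
  have at_\<tau>: "f k \<tau> \<le> 0" if k: "k \<in> G" for k
  proof (rule ccontr)
    assume "\<not> f k \<tau> \<le> 0"
    moreover have "continuous_on {0..\<tau>} (f k)"
      using cont[OF k] k0(2) by (elim continuous_on_subset) auto
    ultimately obtain \<sigma> where \<sigma>: "\<sigma> \<in> {0..<\<tau>}" "\<And>t. t \<in> {\<sigma>..\<tau>} \<Longrightarrow> f k t > 0"
      using continuous_on_left_neighbourhood_gt[of 0 \<tau> "f k" 0] pos by auto
    have "f k \<sigma> > 0" using \<sigma> by auto
    then show False using before[OF k \<sigma>(1)] by simp
  qed
  show ?thesis
    using pos k0 at_\<tau>[OF k0(1)] before at_\<tau> by (intro that[of \<tau> k0]) auto
qed

lemma integral_le_exp_increment:
  fixes g :: "real \<Rightarrow> real"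
  assumes g: "(g has_integral I) {\<sigma>..\<tau>}" and "\<sigma> \<le> \<tau>"
    and bound: "\<And>t. t \<in> {\<sigma>..\<tau>} \<Longrightarrow> g t \<le> lam * (exp (lam * t) * c)"
  shows "I \<le> exp (lam * \<tau>) * c - exp (lam * \<sigma>) * c"
proof -
  have "((\<lambda>t. lam * (exp (lam * t) * c)) has_integral (exp (lam * \<tau>) * c - exp (lam * \<sigma>) * c)) {\<sigma>..\<tau>}"
  proof (rule fundamental_theorem_of_calculus)
    fix t show "((\<lambda>t. exp (lam * t) * c) has_vector_derivative lam * (exp (lam * t) * c)) (at t within {\<sigma>..\<tau>})"
      unfolding has_real_derivative_iff_has_vector_derivative[symmetric]
      by (auto intro!: derivative_eq_intros)
  qed fact
  then show ?thesis using g bound by (intro has_integral_le[OF g]) auto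
qed

text \<open>At a first contact
  time tau the increment of theta y_{k0} over a short interval before tau would be at most that
  of the barrier, contradicting strict inequality before tau.\<close>
lemma exponential_barrier:
  fixes G :: "'i set" and y g :: "'i \<Rightarrow> real \<Rightarrow> real" and V s :: "'i \<Rightarrow> real"
  assumes finG: "finite G" and lam0: "lam \<ge> 0"
    and ycont: "\<And>j. j \<in> G \<Longrightarrow> continuous_on {0..T} (y j)"
    and yint: "\<And>j \<sigma> \<tau>. j \<in> G \<Longrightarrow> 0 \<le> \<sigma> \<Longrightarrow> \<sigma> \<le> \<tau> \<Longrightarrow> \<tau> \<le> T \<Longrightarrow>
      (g j has_integral (y j \<tau> - y j \<sigma>)) {\<sigma>..\<tau>}"
    and start: "\<And>j. j \<in> G \<Longrightarrow> \<bar>y j 0\<bar> < V j - s j"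
    and s0: "\<And>j. j \<in> G \<Longrightarrow> s j \<ge> 0" and s_lt: "\<And>j. j \<in> G \<Longrightarrow> 2 * s j < V j"
    and drift: "\<And>j t \<theta>. j \<in> G \<Longrightarrow> t \<in> {0..T} \<Longrightarrow> \<theta> = 1 \<or> \<theta> = -1 \<Longrightarrow> \<theta> * y j t > s j \<Longrightarrow>
      (\<And>k. k \<in> G \<Longrightarrow> \<bar>y k t\<bar> \<le> exp (lam * t) * V k - s k) \<Longrightarrow> \<theta> * g j t \<le> lam * (exp (lam * t) * V j)"
    and j: "j \<in> G" and t: "t \<in> {0..T}"
  shows "\<bar>y j t\<bar> < exp (lam * t) * V j - s j"
proof (rule ccontr)
  assume above: "\<not> ?thesis"
  define u where "u k t = exp (lam * t) * V k - s k" for k t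
  have cont: "continuous_on {0..T} (\<lambda>t. \<bar>y k t\<bar> - u k t)" if "k \<in> G" for k
    unfolding u_def by (intro continuous_intros ycont that)
  have start': "\<bar>y k 0\<bar> - u k 0 < 0" if "k \<in> G" for k using start[OF that] by (simp add: u_def)
  have cross: "\<bar>y j t\<bar> - u j t \<ge> 0" using above unfolding u_def by simp
  obtain \<tau> k0 where \<tau>: "\<tau> \<in> {0<..T}" and k0: "k0 \<in> G" "\<bar>y k0 \<tau>\<bar> - u k0 \<tau> = 0"
    and before: "\<And>k t'. k \<in> G \<Longrightarrow> t' \<in> {0..<\<tau>} \<Longrightarrow> \<bar>y k t'\<bar> - u k t' < 0"
    and at_\<tau>: "\<And>k. k \<in> G \<Longrightarrow> \<bar>y k \<tau>\<bar> - u k \<tau> \<le> 0"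
    using first_crossing[where f="\<lambda>k t. \<bar>y k t\<bar> - u k t", OF finG cont start' j t cross] by blast
  obtain \<theta> :: real where \<theta>: "\<theta> = 1 \<or> \<theta> = -1" "\<theta> * y k0 \<tau> = u k0 \<tau>"
    using k0(2) by (cases "y k0 \<tau> \<ge> 0") (auto intro: that[of 1] that[of "-1"])
  have "u k0 \<tau> > s k0"
  proof -
    have "1 \<le> exp (lam * \<tau>)" using lam0 \<tau> by simp
    moreover have "V k0 \<ge> 0" using s0[OF k0(1)] s_lt[OF k0(1)] by linarith
    ultimately have "V k0 \<le> exp (lam * \<tau>) * V k0" using mult_right_mono[of 1 "exp (lam * \<tau>)" "V k0"] by simp
    then show ?thesis unfolding u_def using s_lt[OF k0(1)] by linarith
  qed
  moreover have "continuous_on {0..\<tau>} (\<lambda>t. \<theta> * y k0 t)"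
    using continuous_on_subset[OF ycont[OF k0(1)], of "{0..\<tau>}"] \<tau> by (intro continuous_intros) auto
  ultimately obtain \<sigma> where \<sigma>: "\<sigma> \<in> {0..<\<tau>}" "\<And>t. t \<in> {\<sigma>..\<tau>} \<Longrightarrow> \<theta> * y k0 t > s k0"
    using continuous_on_left_neighbourhood_gt[of 0 \<tau> "\<lambda>t. \<theta> * y k0 t" "s k0"] \<theta>(2) \<tau> by auto
  have inward: "\<theta> * g k0 t \<le> lam * (exp (lam * t) * V k0)" if t: "t \<in> {\<sigma>..\<tau>}" for t
  proof (rule drift[OF k0(1) _ \<theta>(1) \<sigma>(2)[OF t]])
    show "t \<in> {0..T}" using t \<sigma>(1) \<tau> by auto
    show "\<bar>y k t\<bar> \<le> exp (lam * t) * V k - s k" if "k \<in> G" for k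
      using before[OF that, of t] at_\<tau>[OF that] t \<sigma>(1) unfolding u_def by (cases "t = \<tau>") auto
  qed
  have "((\<lambda>t. \<theta> * g k0 t) has_integral \<theta> * (y k0 \<tau> - y k0 \<sigma>)) {\<sigma>..\<tau>}"
    using \<sigma>(1) \<tau> by (intro has_integral_mult_right yint[OF k0(1)]) auto
  then have "\<theta> * (y k0 \<tau> - y k0 \<sigma>) \<le> exp (lam * \<tau>) * V k0 - exp (lam * \<sigma>) * V k0"
    by (rule integral_le_exp_increment) (use \<sigma>(1) inward in auto)
  moreover have "\<theta> * y k0 \<sigma> < u k0 \<sigma>"
    using before[OF k0(1), of \<sigma>] \<sigma>(1) \<theta>(1) by (auto simp: abs_if split: if_splits)
  ultimately show False using \<theta>(2) unfolding u_def by (simp add: algebra_simps)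
qed

lemma integral_form_increments:
  fixes g y :: "real \<Rightarrow> real"
  assumes int: "\<And>t. t \<in> {0..T} \<Longrightarrow> (g has_integral (y t - y0)) {0..t}" and T0: "T \<ge> 0"
  shows "continuous_on {0..T} y"
    and "\<And>\<sigma> \<tau>. 0 \<le> \<sigma> \<Longrightarrow> \<sigma> \<le> \<tau> \<Longrightarrow> \<tau> \<le> T \<Longrightarrow> (g has_integral (y \<tau> - y \<sigma>)) {\<sigma>..\<tau>}"
proof -
  have gint: "g integrable_on {0..T}" using int[of T] T0 by auto
  have yeq: "y t = y0 + integral {0..t} g" if "t \<in> {0..T}" for t
    using integral_unique[OF int[OF that]] by simp
  have "continuous_on {0..T} (\<lambda>t. y0 + integral {0..t} g)"
    by (intro continuous_intros indefinite_integral_continuous_1 gint)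
  then show "continuous_on {0..T} y" by (rule continuous_on_eq) (simp add: yeq)
  fix \<sigma> \<tau> :: real assume st: "0 \<le> \<sigma>" "\<sigma> \<le> \<tau>" "\<tau> \<le> T"
  have "integral {0..\<sigma>} g + integral {\<sigma>..\<tau>} g = integral {0..\<tau>} g"
    using st by (intro Henstock_Kurzweil_Integration.integral_combine integrable_subinterval_real[OF gint]) auto
  moreover have "g integrable_on {\<sigma>..\<tau>}" using st by (intro integrable_subinterval_real[OF gint]) auto
  moreover have "y \<tau> - y \<sigma> = integral {0..\<tau>} g - integral {0..\<sigma>} g" using yeq[of \<tau>] yeq[of \<sigma>] st by simp
  ultimately show "(g has_integral (y \<tau> - y \<sigma>)) {\<sigma>..\<tau>}" by (metis add_diff_cancel_left' integrable_integral)
qed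

text \<open>It follows from the barrier for y_j = X_j - z_j and V_j + e, letting e -> 0.\<close>
lemma comparison_bound:
  fixes G :: "'i set" and X z g :: "'i \<Rightarrow> real \<Rightarrow> real" and x s V :: "'i \<Rightarrow> real"
    and A :: "'i \<Rightarrow> 'i \<Rightarrow> real" and lam T :: real
  assumes finG: "finite G" and T0: "T \<ge> 0" and lam0: "lam \<ge> 0"
    and int: "\<And>j t. j \<in> G \<Longrightarrow> t \<in> {0..T} \<Longrightarrow> (g j has_integral (X j t - x j - z j t)) {0..t}"
    and zb: "\<And>j t. j \<in> G \<Longrightarrow> t \<in> {0..T} \<Longrightarrow> \<bar>z j t\<bar> \<le> s j"
    and drift_pos: "\<And>j t. j \<in> G \<Longrightarrow> t \<in> {0..T} \<Longrightarrow> X j t > 0 \<Longrightarrow> g j t \<le> (\<Sum>k\<in>G. A k j * \<bar>X k t\<bar>)"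
    and drift_neg: "\<And>j t. j \<in> G \<Longrightarrow> t \<in> {0..T} \<Longrightarrow> X j t < 0 \<Longrightarrow> - g j t \<le> (\<Sum>k\<in>G. A k j * \<bar>X k t\<bar>)"
    and A0: "\<And>k j. A k j \<ge> 0"
    and Vb: "\<And>j. j \<in> G \<Longrightarrow> V j \<ge> \<bar>x j\<bar> + 2 * s j"
    and AV: "\<And>j. j \<in> G \<Longrightarrow> (\<Sum>k\<in>G. A k j * V k) \<le> lam * V j"
    and A_col: "\<And>j. j \<in> G \<Longrightarrow> (\<Sum>k\<in>G. A k j) \<le> lam"
    and j: "j \<in> G"
  shows "\<bar>X j T\<bar> \<le> exp (lam * T) * V j"
proof -
  define y where "y j t = X j t - z j t" for j t
  have s0: "s j \<ge> 0" if "j \<in> G" for j using zb[OF that, of 0] T0 by auto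
  have y_int: "\<And>t. t \<in> {0..T} \<Longrightarrow> (g j has_integral (y j t - x j)) {0..t}" if "j \<in> G" for j
    using int[OF that] unfolding y_def by (simp add: algebra_simps)
  note ycont = integral_form_increments(1)[OF y_int T0] and yint = integral_form_increments(2)[OF y_int T0]
  have y0: "y j 0 = x j" if "j \<in> G" for j using integral_unique[OF int[OF that, of 0]] T0 by (simp add: y_def)
  have barrier: "\<bar>y j T\<bar> < exp (lam * T) * (V j + e) - s j" if e: "e > 0" for e
  proof (rule exponential_barrier[OF finG lam0 ycont yint _ s0 _ _ j])
    show "\<bar>y k 0\<bar> < V k + e - s k" if "k \<in> G" for k
      using y0[OF that] Vb[OF that] s0[OF that] e by simp
    show "2 * s k < V k + e" if "k \<in> G" for k using Vb[OF that] e by linarith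
    show "\<theta> * g k t \<le> lam * (exp (lam * t) * (V k + e))"
      if k: "k \<in> G" and t: "t \<in> {0..T}" and \<theta>: "\<theta> = 1 \<or> \<theta> = -1" and out: "\<theta> * y k t > s k"
        and inside: "\<And>l. l \<in> G \<Longrightarrow> \<bar>y l t\<bar> \<le> exp (lam * t) * (V l + e) - s l" for k t \<theta>
    proof -
      have "\<theta> * g k t \<le> (\<Sum>l\<in>G. A l k * \<bar>X l t\<bar>)"
        using \<theta>
      proof
        assume "\<theta> = 1"
        then show ?thesis using out zb[OF k t] drift_pos[OF k t] unfolding y_def by simp
      next
        assume "\<theta> = -1"
        then show ?thesis using out zb[OF k t] drift_neg[OF k t] unfolding y_def by simp
      qed
      also have "\<dots> \<le> (\<Sum>l\<in>G. A l k * (exp (lam * t) * (V l + e)))"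
      proof (intro sum_mono mult_left_mono A0)
        fix l assume l: "l \<in> G"
        have "\<bar>X l t\<bar> \<le> \<bar>y l t\<bar> + \<bar>z l t\<bar>"
          using abs_triangle_ineq[of "X l t - z l t" "z l t"] unfolding y_def by simp
        then show "\<bar>X l t\<bar> \<le> exp (lam * t) * (V l + e)" using inside[OF l] zb[OF l t] by linarith
      qed
      also have "\<dots> = exp (lam * t) * ((\<Sum>l\<in>G. A l k * V l) + e * (\<Sum>l\<in>G. A l k))"
        by (simp add: sum_distrib_left sum_distrib_right sum.distrib algebra_simps)
      also have "\<dots> \<le> exp (lam * t) * (lam * V k + e * lam)"
        using AV[OF k] A_col[OF k] e by (intro mult_left_mono add_mono) auto
      finally show ?thesis by (simp add: algebra_simps)
    qed
  qed (use T0 in auto)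
  have "\<bar>y j T\<bar> + s j \<le> exp (lam * T) * V j"
  proof (rule field_le_epsilon)
    fix e :: real assume e: "e > 0"
    show "\<bar>y j T\<bar> + s j \<le> exp (lam * T) * V j + e"
      using barrier[of "e / exp (lam * T)"] e by (simp add: algebra_simps)
  qed
  moreover have "\<bar>X j T\<bar> \<le> \<bar>y j T\<bar> + s j" using zb[OF j, of T] T0 unfolding y_def by auto
  ultimately show ?thesis by linarith
qed

section \<open>Symmetric stable noise: tails and the expected supremum\<close>

lemma stable_family_prob_space: "stable_family M \<alpha> Z \<Longrightarrow> prob_space M"
  unfolding stable_family_def by blast

lemma stable_family_measurable: "stable_family M \<alpha> Z \<Longrightarrow> Z i t \<in> borel_measurable M"
  unfolding stable_family_def by blast

lemma stable_family_zero: "stable_family M \<alpha> Z \<Longrightarrow> \<omega> \<in> space M \<Longrightarrow> Z i 0 \<omega> = 0"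
  unfolding stable_family_def by blast

lemma stable_family_char: "stable_family M \<alpha> Z \<Longrightarrow> 0 \<le> s \<Longrightarrow> s \<le> t \<Longrightarrow>
    char (distr M borel (\<lambda>\<omega>. Z i t \<omega> - Z i s \<omega>)) = (\<lambda>u. complex_of_real (exp (- (t - s) * \<bar>u\<bar> powr \<alpha>)))"
  unfolding stable_family_def by blast

lemma stable_family_indep: "stable_family M \<alpha> Z \<Longrightarrow> finite F \<Longrightarrow> 0 \<le> tt 0 \<Longrightarrow> incseq tt \<Longrightarrow>
    prob_space.indep_vars M (\<lambda>_. borel) (\<lambda>(i, k) \<omega>. Z i (tt (Suc k)) \<omega> - Z i (tt k) \<omega>) (F \<times> {..<n})"
  unfolding stable_family_def by blast

lemma stable_family_right_continuous:
  assumes "stable_family M \<alpha> Z"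
  shows "AE \<omega> in M. \<forall>t\<ge>0. continuous (at_right t) (\<lambda>s. Z i s \<omega>)"
proof -
  have "AE \<omega> in M. \<forall>t\<ge>0. continuous (at_right t) (\<lambda>s. Z i s \<omega>) \<and>
      (t > 0 \<longrightarrow> (\<exists>l. ((\<lambda>s. Z i s \<omega>) \<longlongrightarrow> l) (at_left t)))"
    using assms unfolding stable_family_def by blast
  then show ?thesis by (rule AE_mp) (intro AE_I2, auto)
qed

text \<open>Truncation inequality for characteristic functions, in the nonnegative form
  u P(|X| >= 2/u) <= \<integral>_{-u}^{u} E(1 - cos(tX)) dt (Tonelli instead of Fubini).\<close>
lemma window_integral_one_minus_cos:
  fixes u x :: real assumes "u > 0" "x \<noteq> 0"
  shows "(\<integral>\<^sup>+t. indicator {-u..u} t * ennreal (1 - cos (t * x)) \<partial>lborel) = ennreal (2 * u - 2 * sin (u * x) / x)"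
proof -
  have "((\<lambda>t. 1 - cos (t * x)) has_integral ((u - sin (u * x) / x) - (-u - sin (-u * x) / x))) {-u..u}"
  proof (rule fundamental_theorem_of_calculus)
    show "-u \<le> u" using assms by simp
    fix t assume "t \<in> {-u..u}"
    show "((\<lambda>t. t - sin (t * x) / x) has_vector_derivative 1 - cos (t * x)) (at t within {-u..u})"
      unfolding has_real_derivative_iff_has_vector_derivative[symmetric]
      using assms by (auto intro!: derivative_eq_intros)
  qed
  then have "((\<lambda>t. 1 - cos (t * x)) has_integral (2 * u - 2 * sin (u * x) / x)) {-u..u}"
    by (simp add: field_simps)
  then have "(\<integral>\<^sup>+t. indicator {-u..u} t * (1 - cos (t * x)) \<partial>lborel) = ennreal (2 * u - 2 * sin (u * x) / x)"
    by (intro nn_integral_has_integral_lebesgue) auto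
  then show ?thesis by (simp add: ennreal_mult' ennreal_indicator mult.commute)
qed

text \<open>For |x| >= 2/u the window integral is at least u, since |sin(ux)/x| <= u/2.\<close>
lemma window_integral_lower_bound:
  fixes u x :: real assumes u: "u > 0"
  shows "ennreal u * indicator {x. 2 / u \<le> \<bar>x\<bar>} x \<le> (\<integral>\<^sup>+t. indicator {-u..u} t * ennreal (1 - cos (t * x)) \<partial>lborel)"
proof (cases "2 / u \<le> \<bar>x\<bar>")
  case True
  then have x0: "x \<noteq> 0" "\<bar>x\<bar> > 0" using u by (auto simp: field_simps)
  have "\<bar>sin (u * x) / x\<bar> \<le> 1 / \<bar>x\<bar>"
    using abs_sin_le_one[of "u * x"] x0 by (simp add: abs_divide divide_right_mono)
  also have "1 / \<bar>x\<bar> \<le> u / 2" using True u x0 by (simp add: field_simps)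
  finally have "u \<le> 2 * u - 2 * sin (u * x) / x" by linarith
  then show ?thesis using True by (simp add: window_integral_one_minus_cos[OF u x0(1)] ennreal_leI)
qed simp

lemma real_distribution_truncation:
  assumes N: "real_distribution N" and u: "u > 0"
  shows "ennreal u * emeasure N {x. 2 / u \<le> \<bar>x\<bar>}
    \<le> (\<integral>\<^sup>+t. indicator {-u..u} t * (\<integral>\<^sup>+x. ennreal (1 - cos (t * x)) \<partial>N) \<partial>lborel)"
proof -
  interpret real_distribution N by fact
  interpret pair_sigma_finite N lborel ..
  have S: "{x. 2 / u \<le> \<bar>x\<bar>} \<in> sets N" by simp
  have "ennreal u * emeasure N {x. 2 / u \<le> \<bar>x\<bar>} = (\<integral>\<^sup>+x. ennreal u * indicator {x. 2 / u \<le> \<bar>x\<bar>} x \<partial>N)"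
    using S by (simp add: nn_integral_cmult_indicator)
  also have "\<dots> \<le> (\<integral>\<^sup>+x. (\<integral>\<^sup>+t. indicator {-u..u} t * ennreal (1 - cos (t * x)) \<partial>lborel) \<partial>N)"
    by (intro nn_integral_mono window_integral_lower_bound u)
  also have "\<dots> = (\<integral>\<^sup>+t. (\<integral>\<^sup>+x. indicator {-u..u} t * ennreal (1 - cos (t * x)) \<partial>N) \<partial>lborel)"
    by (rule Fubini'[symmetric]) measurable
  also have "\<dots> = (\<integral>\<^sup>+t. indicator {-u..u} t * (\<integral>\<^sup>+x. ennreal (1 - cos (t * x)) \<partial>N) \<partial>lborel)"
    by (simp add: nn_integral_cmult)
  finally show ?thesis .
qed

lemma real_distribution_cos_defect:
  assumes "real_distribution N"
  shows "(\<integral>\<^sup>+x. ennreal (1 - cos (v * x)) \<partial>N) = ennreal (1 - Re (char N v))"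
proof -
  interpret real_distribution N by fact
  have cos_int: "integrable N (\<lambda>x. cos (v * x))"
    by (rule integrable_const_bound[where B=1]) auto
  have "(\<integral>\<^sup>+x. ennreal (1 - cos (v * x)) \<partial>N) = ennreal (\<integral>x. 1 - cos (v * x) \<partial>N)"
    using cos_int by (intro nn_integral_eq_integral) auto
  also have "(\<integral>x. 1 - cos (v * x) \<partial>N) = 1 - (\<integral>x. cos (v * x) \<partial>N)"
    using cos_int prob_space by (simp add: space_eq_univ)
  also have "(\<integral>x. cos (v * x) \<partial>N) = Re (char N v)"
  proof -
    have "integrable N (\<lambda>x. iexp (v * x))" by (rule integrable_const_bound[where B=1]) auto
    then have "Re (char N v) = (\<integral>x. Re (iexp (v * x)) \<partial>N)" unfolding char_def by simp
    then show ?thesis by (simp add: Re_exp)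
  qed
  finally show ?thesis .
qed

text \<open>Tail of a stable increment: since 1 - e^{-(t-s)|v|^alpha} <= (t-s)|v|^alpha, the truncation
  inequality gives P(|Z_i(t) - Z_i(s)| >= r) <= 2^{1+alpha} (t - s) / r^alpha.\<close>
lemma stable_increment_tail:
  assumes sf: "stable_family M \<alpha> Z" and \<alpha>: "\<alpha> > 0" and st: "0 \<le> s" "s \<le> t" and r: "r > 0"
  shows "measure M {\<omega>\<in>space M. r \<le> \<bar>Z i t \<omega> - Z i s \<omega>\<bar>} \<le> 2 * 2 powr \<alpha> * (t - s) / r powr \<alpha>"
proof -
  interpret prob_space M by (rule stable_family_prob_space[OF sf])
  define D where "D \<omega> = Z i t \<omega> - Z i s \<omega>" for \<omega>
  have D_meas: "D \<in> borel_measurable M" unfolding D_def using stable_family_measurable[OF sf] by measurable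
  define N where "N = distr M borel D"
  have N: "real_distribution N" unfolding N_def using D_meas by simp
  interpret N: real_distribution N by (rule N)
  define u where "u = 2 / r"
  have u: "u > 0" "2 / u = r" unfolding u_def using r by auto
  have defect: "ennreal (1 - Re (char N v)) \<le> ennreal ((t - s) * u powr \<alpha>)" if "v \<in> {-u..u}" for v
  proof (rule ennreal_leI)
    have "1 - Re (char N v) = 1 - exp (- ((t - s) * \<bar>v\<bar> powr \<alpha>))"
      unfolding N_def D_def stable_family_char[OF sf st] by (simp add: algebra_simps)
    also have "\<dots> \<le> (t - s) * \<bar>v\<bar> powr \<alpha>" using exp_ge_add_one_self[of "- ((t - s) * \<bar>v\<bar> powr \<alpha>)"] by linarith
    also have "\<dots> \<le> (t - s) * u powr \<alpha>" using that st \<alpha> by (intro mult_left_mono powr_mono2) auto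
    finally show "1 - Re (char N v) \<le> (t - s) * u powr \<alpha>" .
  qed
  have "ennreal u * emeasure N {x. 2 / u \<le> \<bar>x\<bar>}
      \<le> (\<integral>\<^sup>+v. indicator {-u..u} v * ennreal (1 - Re (char N v)) \<partial>lborel)"
    using real_distribution_truncation[OF N u(1)] by (simp add: real_distribution_cos_defect[OF N])
  also have "\<dots> \<le> (\<integral>\<^sup>+v. ennreal ((t - s) * u powr \<alpha>) * indicator {-u..u} v \<partial>lborel)"
    by (intro nn_integral_mono) (auto simp: defect split: split_indicator)
  also have "\<dots> = ennreal ((t - s) * u powr \<alpha>) * ennreal (2 * u)"
    using u by (simp add: nn_integral_cmult_indicator emeasure_lborel_Icc)
  also have "\<dots> = ennreal (u * (2 * (t - s) * u powr \<alpha>))"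
    using u st by (simp add: ennreal_mult'[symmetric] algebra_simps)
  finally have "ennreal (u * measure N {x. r \<le> \<bar>x\<bar>}) \<le> ennreal (u * (2 * (t - s) * u powr \<alpha>))"
    using u by (simp add: N.emeasure_eq_measure ennreal_mult')
  then have "measure N {x. r \<le> \<bar>x\<bar>} \<le> 2 * (t - s) * u powr \<alpha>"
    using u st by (simp add: ennreal_le_iff)
  moreover have "measure N {x. r \<le> \<bar>x\<bar>} = measure M {\<omega>\<in>space M. r \<le> \<bar>Z i t \<omega> - Z i s \<omega>\<bar>}"
    unfolding N_def using D_meas by (subst measure_distr) (auto simp: D_def vimage_def Collect_conj_eq Int_commute)
  moreover have "2 * (t - s) * u powr \<alpha> = 2 * 2 powr \<alpha> * (t - s) / r powr \<alpha>"
    unfolding u_def using r by (simp add: powr_divide)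
  ultimately show ?thesis by simp
qed


text \<open>Stable increments are symmetric (their characteristic function is even), so each sign has
  probability at least 1/2.\<close>
lemma stable_increment_symmetric:
  assumes sf: "stable_family M \<alpha> Z" and st: "0 \<le> s" "s \<le> t"
  shows "measure M {\<omega>\<in>space M. Z i t \<omega> - Z i s \<omega> \<ge> 0} \<ge> 1/2"
    and "measure M {\<omega>\<in>space M. Z i t \<omega> - Z i s \<omega> \<le> 0} \<ge> 1/2"
proof -
  interpret prob_space M by (rule stable_family_prob_space[OF sf])
  define D where "D \<omega> = Z i t \<omega> - Z i s \<omega>" for \<omega>
  have Dm[measurable]: "D \<in> borel_measurable M" unfolding D_def using stable_family_measurable[OF sf] by measurable
  have Dm': "(\<lambda>\<omega>. - D \<omega>) \<in> borel_measurable M" by measurable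
  define N1 where "N1 = distr M borel D"
  define N2 where "N2 = distr M borel (\<lambda>\<omega>. - D \<omega>)"
  have RD1: "real_distribution N1" unfolding N1_def using Dm by simp
  have RD2: "real_distribution N2" unfolding N2_def using Dm' by simp
  have c1: "char N1 = (\<lambda>v. complex_of_real (exp (- (t - s) * \<bar>v\<bar> powr \<alpha>)))"
    unfolding N1_def D_def by (rule stable_family_char[OF sf st])
  have "char N2 v = char N1 (- v)" for v
  proof -
    have "char N2 v = (CLINT \<omega>|M. iexp (v * - D \<omega>))"
      unfolding char_def N2_def by (subst integral_distr) (auto intro!: borel_measurable_continuous_onI continuous_intros)
    also have "\<dots> = (CLINT \<omega>|M. iexp (- v * D \<omega>))" by simp
    also have "\<dots> = char N1 (- v)"
      unfolding char_def N1_def by (subst integral_distr) (auto intro!: borel_measurable_continuous_onI continuous_intros)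
    finally show ?thesis .
  qed
  then have "char N2 = char N1" using c1 by (auto simp: fun_eq_iff)
  then have N12: "N1 = N2" using Levy_uniqueness[OF RD1 RD2] by simp
  have setP: "{x::real. 0 \<le> x} \<in> sets borel" by (rule borel_closed) (intro closed_Collect_le continuous_intros)
  have m1: "measure N1 {x. 0 \<le> x} = measure M {\<omega>\<in>space M. Z i t \<omega> - Z i s \<omega> \<ge> 0}"
    unfolding N1_def using measure_distr[OF Dm setP] by (simp add: D_def Collect_conj_eq Int_commute vimage_def)
  have m2: "measure N2 {x. 0 \<le> x} = measure M {\<omega>\<in>space M. Z i t \<omega> - Z i s \<omega> \<le> 0}"
    unfolding N2_def using measure_distr[OF Dm' setP] by (simp add: D_def Collect_conj_eq Int_commute vimage_def)
  have eq: "measure M {\<omega>\<in>space M. Z i t \<omega> - Z i s \<omega> \<ge> 0} = measure M {\<omega>\<in>space M. Z i t \<omega> - Z i s \<omega> \<le> 0}"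
    using m1 m2 N12 by simp
  have sets: "{\<omega>\<in>space M. Z i t \<omega> - Z i s \<omega> \<ge> 0} \<in> events" "{\<omega>\<in>space M. Z i t \<omega> - Z i s \<omega> \<le> 0} \<in> events"
    using stable_family_measurable[OF sf] by measurable
  have "1 = prob (space M)" using prob_space by simp
  also have "space M = {\<omega>\<in>space M. Z i t \<omega> - Z i s \<omega> \<ge> 0} \<union> {\<omega>\<in>space M. Z i t \<omega> - Z i s \<omega> \<le> 0}" by auto
  also have "prob \<dots> \<le> prob {\<omega>\<in>space M. Z i t \<omega> - Z i s \<omega> \<ge> 0} + prob {\<omega>\<in>space M. Z i t \<omega> - Z i s \<omega> \<le> 0}"
    by (rule measure_Un_le[OF sets])
  finally show "measure M {\<omega>\<in>space M. Z i t \<omega> - Z i s \<omega> \<ge> 0} \<ge> 1/2"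
    and "measure M {\<omega>\<in>space M. Z i t \<omega> - Z i s \<omega> \<le> 0} \<ge> 1/2" using eq by auto
qed

lemma first_passage_event_measurable:
  fixes k :: nat and b c :: real
  shows "Measurable.pred (PiM ({i} \<times> {..<k}) (\<lambda>_. borel))
    (\<lambda>f. b < \<bar>\<Sum>l'<k. f (i, l')\<bar> \<and> (\<forall>l<k. \<bar>\<Sum>l'<l. f (i, l')\<bar> \<le> b) \<and> 0 < c * (\<Sum>l'<k. (f (i, l') :: real)))"
proof -
  have partial_sum [measurable]: "(\<lambda>f. \<Sum>l'<l. (f (i, l') :: real)) \<in> borel_measurable (PiM ({i} \<times> {..<k}) (\<lambda>_. borel))"
    if "l \<le> k" for l
    by (rule borel_measurable_sum, rule measurable_component_singleton) (use that in auto)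
  have "Measurable.pred (PiM ({i} \<times> {..<k}) (\<lambda>_. borel)) (\<lambda>f. l < k \<longrightarrow> \<bar>\<Sum>l'<l. (f (i, l') :: real)\<bar> \<le> b)" for l
  proof (cases "l < k")
    case True
    then show ?thesis using partial_sum[of l] by measurable
  qed simp
  then have [measurable]: "Measurable.pred (PiM ({i} \<times> {..<k}) (\<lambda>_. borel))
      (\<lambda>f. \<forall>l<k. \<bar>\<Sum>l'<l. (f (i, l') :: real)\<bar> \<le> b)"
    by (rule pred_intros_countable(1))
  show ?thesis using partial_sum[of k] by measurable
qed

text \<open>Independence of the past and the future at a deterministic index: the first-passage event
  at index k (with a prescribed sign of Z_i(t_k)) is independent of the increment
  Z_i(t_m) - Z_i(t_k), since they are functions of disjoint blocks of independent increments.\<close>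
lemma first_passage_indep:
  assumes sf: "stable_family M \<alpha> Z" and inc: "incseq tt" and t0: "tt 0 = 0" and km: "k \<le> m"
    and Q: "Q \<in> sets borel"
  shows "measure M {\<omega>\<in>space M. (b < \<bar>Z i (tt k) \<omega>\<bar> \<and> (\<forall>l<k. \<bar>Z i (tt l) \<omega>\<bar> \<le> b) \<and> 0 < c * Z i (tt k) \<omega>)
             \<and> Z i (tt m) \<omega> - Z i (tt k) \<omega> \<in> Q}
       = measure M {\<omega>\<in>space M. b < \<bar>Z i (tt k) \<omega>\<bar> \<and> (\<forall>l<k. \<bar>Z i (tt l) \<omega>\<bar> \<le> b) \<and> 0 < c * Z i (tt k) \<omega>}
         * measure M {\<omega>\<in>space M. Z i (tt m) \<omega> - Z i (tt k) \<omega> \<in> Q}"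
proof -
  interpret prob_space M by (rule stable_family_prob_space[OF sf])
  define \<xi> where "\<xi> = (\<lambda>(i', l) \<omega>. Z i' (tt (Suc l)) \<omega> - Z i' (tt l) \<omega>)"
  have ind: "indep_vars (\<lambda>_. borel) \<xi> ({i} \<times> {..<m})"
    unfolding \<xi>_def by (rule stable_family_indep[OF sf]) (use t0 inc in auto)
  define A where "A = {i} \<times> {..<k}"
  define B where "B = {i} \<times> {k..<m}"
  have iv: "indep_var (PiM A (\<lambda>_. borel)) (\<lambda>\<omega>. restrict (\<lambda>p. \<xi> p \<omega>) A) (PiM B (\<lambda>_. borel)) (\<lambda>\<omega>. restrict (\<lambda>p. \<xi> p \<omega>) B)"
    by (rule indep_var_restrict[OF ind]) (use km in \<open>auto simp: A_def B_def\<close>)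
  define Y1 where "Y1 f = (b < \<bar>\<Sum>l'<k. f (i, l')\<bar> \<and> (\<forall>l<k. \<bar>\<Sum>l'<l. f (i, l')\<bar> \<le> b) \<and> 0 < c * (\<Sum>l'<k. (f (i, l') :: real)))"
    for f
  define Y2 where "Y2 f = (\<Sum>l\<in>{k..<m}. (f (i, l) :: real))" for f
  have Y1m: "Y1 \<in> measurable (PiM A (\<lambda>_. borel)) (count_space UNIV)"
    unfolding Y1_def A_def by (rule first_passage_event_measurable)
  define Y1r where "Y1r f = (if Y1 f then 1 else (0::real))" for f
  have Y1rm: "Y1r \<in> borel_measurable (PiM A (\<lambda>_. borel))"
    unfolding Y1r_def using Y1m by measurable
  have Y2m: "Y2 \<in> borel_measurable (PiM B (\<lambda>_. borel))"
    unfolding Y2_def by (rule borel_measurable_sum, rule measurable_component_singleton) (auto simp: B_def)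
  have ivc: "indep_var borel (Y1r \<circ> (\<lambda>\<omega>. restrict (\<lambda>p. \<xi> p \<omega>) A)) borel (Y2 \<circ> (\<lambda>\<omega>. restrict (\<lambda>p. \<xi> p \<omega>) B))"
    by (rule indep_var_compose[OF iv Y1rm Y2m])
  have tel: "(\<Sum>l'<l. \<xi> (i, l') \<omega>) = Z i (tt l) \<omega>" if "\<omega> \<in> space M" for l \<omega>
  proof -
    have "(\<Sum>l'<l. \<xi> (i, l') \<omega>) = (\<Sum>l'<l. Z i (tt (Suc l')) \<omega> - Z i (tt l') \<omega>)" unfolding \<xi>_def by simp
    also have "\<dots> = Z i (tt l) \<omega> - Z i (tt 0) \<omega>" by (rule sum_lessThan_telescope)
    finally show ?thesis using stable_family_zero[OF sf that] t0 by simp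
  qed
  have e0: "(Y1 \<circ> (\<lambda>\<omega>. restrict (\<lambda>p. \<xi> p \<omega>) A)) \<omega> = (b < \<bar>Z i (tt k) \<omega>\<bar> \<and> (\<forall>l<k. \<bar>Z i (tt l) \<omega>\<bar> \<le> b) \<and> 0 < c * Z i (tt k) \<omega>)"
    if "\<omega> \<in> space M" for \<omega>
  proof -
    have r: "(\<Sum>l'<l. restrict (\<lambda>p. \<xi> p \<omega>) A (i, l')) = Z i (tt l) \<omega>" if "l \<le> k" for l
    proof -
      have "(\<Sum>l'<l. restrict (\<lambda>p. \<xi> p \<omega>) A (i, l')) = (\<Sum>l'<l. \<xi> (i, l') \<omega>)"
        by (rule sum.cong) (use that in \<open>auto simp: A_def\<close>)
      then show ?thesis using tel[OF \<open>\<omega> \<in> space M\<close>] by simp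
    qed
    show ?thesis unfolding o_def Y1_def using r by auto
  qed
  have e1: "((Y1r \<circ> (\<lambda>\<omega>. restrict (\<lambda>p. \<xi> p \<omega>) A)) \<omega> = 1) = (b < \<bar>Z i (tt k) \<omega>\<bar> \<and> (\<forall>l<k. \<bar>Z i (tt l) \<omega>\<bar> \<le> b) \<and> 0 < c * Z i (tt k) \<omega>)"
    if "\<omega> \<in> space M" for \<omega>
    using e0[OF that] unfolding Y1r_def o_def by simp
  have e2: "(Y2 \<circ> (\<lambda>\<omega>. restrict (\<lambda>p. \<xi> p \<omega>) B)) \<omega> = Z i (tt m) \<omega> - Z i (tt k) \<omega>" for \<omega>
  proof -
    have "(Y2 \<circ> (\<lambda>\<omega>. restrict (\<lambda>p. \<xi> p \<omega>) B)) \<omega> = (\<Sum>l\<in>{k..<m}. Z i (tt (Suc l)) \<omega> - Z i (tt l) \<omega>)"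
      unfolding o_def Y2_def by (rule sum.cong) (auto simp: B_def \<xi>_def)
    also have "\<dots> = Z i (tt m) \<omega> - Z i (tt k) \<omega>" by (rule sum_Suc_diff'[OF km])
    finally show ?thesis .
  qed
  have "prob ((\<lambda>x. ((Y1r \<circ> (\<lambda>\<omega>. restrict (\<lambda>p. \<xi> p \<omega>) A)) x, (Y2 \<circ> (\<lambda>\<omega>. restrict (\<lambda>p. \<xi> p \<omega>) B)) x)) -` ({1} \<times> Q) \<inter> space M)
     = prob ((Y1r \<circ> (\<lambda>\<omega>. restrict (\<lambda>p. \<xi> p \<omega>) A)) -` {1} \<inter> space M) * prob ((Y2 \<circ> (\<lambda>\<omega>. restrict (\<lambda>p. \<xi> p \<omega>) B)) -` Q \<inter> space M)"
    by (rule indep_varD[OF ivc]) (use Q in auto)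
  moreover have "(\<lambda>x. ((Y1r \<circ> (\<lambda>\<omega>. restrict (\<lambda>p. \<xi> p \<omega>) A)) x, (Y2 \<circ> (\<lambda>\<omega>. restrict (\<lambda>p. \<xi> p \<omega>) B)) x)) -` ({1} \<times> Q) \<inter> space M
     = {\<omega>\<in>space M. (b < \<bar>Z i (tt k) \<omega>\<bar> \<and> (\<forall>l<k. \<bar>Z i (tt l) \<omega>\<bar> \<le> b) \<and> 0 < c * Z i (tt k) \<omega>)
             \<and> Z i (tt m) \<omega> - Z i (tt k) \<omega> \<in> Q}"
    using e1 e2 by auto
  moreover have "(Y1r \<circ> (\<lambda>\<omega>. restrict (\<lambda>p. \<xi> p \<omega>) A)) -` {1} \<inter> space M
     = {\<omega>\<in>space M. b < \<bar>Z i (tt k) \<omega>\<bar> \<and> (\<forall>l<k. \<bar>Z i (tt l) \<omega>\<bar> \<le> b) \<and> 0 < c * Z i (tt k) \<omega>}"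
    using e1 by auto
  moreover have "(Y2 \<circ> (\<lambda>\<omega>. restrict (\<lambda>p. \<xi> p \<omega>) B)) -` Q \<inter> space M
     = {\<omega>\<in>space M. Z i (tt m) \<omega> - Z i (tt k) \<omega> \<in> Q}"
    using e2 by auto
  ultimately show ?thesis by simp
qed

lemma first_passage_decomposition:
  fixes P :: "nat \<Rightarrow> 'a \<Rightarrow> bool"
  shows "{\<omega>\<in>S. \<exists>k\<le>m. P k \<omega>} = (\<Union>k\<in>{..m}. {\<omega>\<in>S. P k \<omega> \<and> (\<forall>l<k. \<not> P l \<omega>)})"
    and "disjoint_family_on (\<lambda>k. {\<omega>\<in>S. P k \<omega> \<and> (\<forall>l<k. \<not> P l \<omega>)}) K"
proof -
  have "\<exists>k\<in>{..m}. P k \<omega> \<and> (\<forall>l<k. \<not> P l \<omega>)" if "k \<le> m" "P k \<omega>" for k \<omega>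
  proof (intro bexI[of _ "LEAST k. P k \<omega>"] conjI allI impI)
    show "P (LEAST k. P k \<omega>) \<omega>" using that(2) by (rule LeastI)
    show "(LEAST k. P k \<omega>) \<in> {..m}" using Least_le[of "\<lambda>k. P k \<omega>", OF that(2)] that(1) by simp
    show "\<not> P l \<omega>" if "l < (LEAST k. P k \<omega>)" for l using not_less_Least[OF that] .
  qed
  then show "{\<omega>\<in>S. \<exists>k\<le>m. P k \<omega>} = (\<Union>k\<in>{..m}. {\<omega>\<in>S. P k \<omega> \<and> (\<forall>l<k. \<not> P l \<omega>)})"
    by blast
  show "disjoint_family_on (\<lambda>k. {\<omega>\<in>S. P k \<omega> \<and> (\<forall>l<k. \<not> P l \<omega>)}) K"
    unfolding disjoint_family_on_def by (auto dest: linorder_neqE_nat)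
qed

lemma first_passage_sign_persists:
  assumes sf: "stable_family M \<alpha> Z" and inc: "incseq tt" and t0: "tt 0 = 0" and km: "k \<le> m"
    and c: "c = 1 \<or> c = -1"
  shows "measure M {\<omega>\<in>space M. b < \<bar>Z i (tt k) \<omega>\<bar> \<and> (\<forall>l<k. \<bar>Z i (tt l) \<omega>\<bar> \<le> b) \<and> 0 < c * Z i (tt k) \<omega>}
    \<le> 2 * measure M {\<omega>\<in>space M. (b < \<bar>Z i (tt k) \<omega>\<bar> \<and> (\<forall>l<k. \<bar>Z i (tt l) \<omega>\<bar> \<le> b) \<and> 0 < c * Z i (tt k) \<omega>)
             \<and> Z i (tt m) \<omega> - Z i (tt k) \<omega> \<in> {x. 0 \<le> c * x}}"
proof -
  have Q: "{x::real. 0 \<le> c * x} \<in> sets borel"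
    by (rule borel_closed) (intro closed_Collect_le continuous_intros)
  have tt: "0 \<le> tt k" "tt k \<le> tt m" using inc km t0 unfolding incseq_def by (metis le0)+
  have "measure M {\<omega>\<in>space M. Z i (tt m) \<omega> - Z i (tt k) \<omega> \<in> {x. 0 \<le> c * x}} \<ge> 1/2"
    using c stable_increment_symmetric[OF sf tt, of i] by auto
  then have "measure M {\<omega>\<in>space M. b < \<bar>Z i (tt k) \<omega>\<bar> \<and> (\<forall>l<k. \<bar>Z i (tt l) \<omega>\<bar> \<le> b) \<and> 0 < c * Z i (tt k) \<omega>} * (1/2)
      \<le> measure M {\<omega>\<in>space M. b < \<bar>Z i (tt k) \<omega>\<bar> \<and> (\<forall>l<k. \<bar>Z i (tt l) \<omega>\<bar> \<le> b) \<and> 0 < c * Z i (tt k) \<omega>}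
        * measure M {\<omega>\<in>space M. Z i (tt m) \<omega> - Z i (tt k) \<omega> \<in> {x. 0 \<le> c * x}}"
    by (intro mult_left_mono) auto
  then show ?thesis unfolding first_passage_indep[OF sf inc t0 km Q] by simp
qed

text \<open>Decompose by the first
  passage index k and its sign; by first_passage_sign_persists, Z_i(t_m) then exceeds b with
  at least half the probability.\<close>
lemma levy_reflection:
  assumes sf: "stable_family M \<alpha> Z" and inc: "incseq tt" and t0: "tt 0 = 0" and b0: "b \<ge> 0"
  shows "measure M {\<omega>\<in>space M. \<exists>k\<le>m. b < \<bar>Z i (tt k) \<omega>\<bar>} \<le> 2 * measure M {\<omega>\<in>space M. b < \<bar>Z i (tt m) \<omega>\<bar>}"
proof -
  interpret prob_space M by (rule stable_family_prob_space[OF sf])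
  have [measurable]: "Z i t \<in> borel_measurable M" for t using stable_family_measurable[OF sf] by blast
  define E where "E k = {\<omega>\<in>space M. b < \<bar>Z i (tt k) \<omega>\<bar> \<and> (\<forall>l<k. \<not> b < \<bar>Z i (tt l) \<omega>\<bar>)}" for k
  define Ec where "Ec c k = {\<omega>\<in>space M. b < \<bar>Z i (tt k) \<omega>\<bar> \<and> (\<forall>l<k. \<bar>Z i (tt l) \<omega>\<bar> \<le> b) \<and> 0 < c * Z i (tt k) \<omega>}"
    for c :: real and k
  define Fc where "Fc c k = {\<omega>\<in>space M. (b < \<bar>Z i (tt k) \<omega>\<bar> \<and> (\<forall>l<k. \<bar>Z i (tt l) \<omega>\<bar> \<le> b) \<and> 0 < c * Z i (tt k) \<omega>)
      \<and> Z i (tt m) \<omega> - Z i (tt k) \<omega> \<in> {x. 0 \<le> c * x}}" for c :: real and k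
  define G where "G k = Fc 1 k \<union> Fc (-1) k" for k
  have Esets: "E k \<in> events" and Ecsets: "Ec c k \<in> events" and Fcsets: "Fc c k \<in> events" for c k
    unfolding E_def Ec_def Fc_def by measurable
  have Gsets: "G k \<in> events" for k unfolding G_def using Fcsets by auto
  have EG: "prob (E k) \<le> 2 * prob (G k)" if "k \<le> m" for k
  proof -
    have "E k = Ec 1 k \<union> Ec (-1) k" "Ec 1 k \<inter> Ec (-1) k = {}" "Fc 1 k \<inter> Fc (-1) k = {}"
      unfolding E_def Ec_def Fc_def using b0 by auto
    then have sums: "prob (E k) = prob (Ec 1 k) + prob (Ec (-1) k)" "prob (G k) = prob (Fc 1 k) + prob (Fc (-1) k)"
      unfolding G_def by (simp_all add: finite_measure_Union Ecsets Fcsets)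
    have "prob (Ec 1 k) + prob (Ec (-1) k) \<le> 2 * prob (Fc 1 k) + 2 * prob (Fc (-1) k)"
      unfolding Ec_def Fc_def by (intro add_mono first_passage_sign_persists[OF sf inc t0 that]) auto
    then show ?thesis unfolding sums by simp
  qed
  have UE: "{\<omega>\<in>space M. \<exists>k\<le>m. b < \<bar>Z i (tt k) \<omega>\<bar>} = (\<Union>k\<in>{..m}. E k)"
    and disjE: "disjoint_family_on E {..m}"
    unfolding E_def by (rule first_passage_decomposition)+
  have "G k \<subseteq> E k" for k unfolding G_def Fc_def E_def by auto
  then have disjG: "disjoint_family_on G {..m}"
    using disjE unfolding disjoint_family_on_def by blast
  have UG: "(\<Union>k\<in>{..m}. G k) \<subseteq> {\<omega>\<in>space M. b < \<bar>Z i (tt m) \<omega>\<bar>}"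
    unfolding G_def Fc_def by auto
  have "prob {\<omega>\<in>space M. \<exists>k\<le>m. b < \<bar>Z i (tt k) \<omega>\<bar>} = (\<Sum>k\<in>{..m}. prob (E k))"
    unfolding UE by (rule finite_measure_finite_Union) (use Esets disjE in auto)
  also have "\<dots> \<le> (\<Sum>k\<in>{..m}. 2 * prob (G k))" by (rule sum_mono) (rule EG, simp)
  also have "\<dots> = 2 * prob (\<Union>k\<in>{..m}. G k)"
    by (subst finite_measure_finite_Union) (use Gsets disjG in \<open>auto simp: sum_distrib_left\<close>)
  also have "\<dots> \<le> 2 * prob {\<omega>\<in>space M. b < \<bar>Z i (tt m) \<omega>\<bar>}"
    using UG by (intro mult_left_mono finite_measure_mono) auto
  finally show ?thesis .
qed

definition dyadic_max :: "('i \<Rightarrow> real \<Rightarrow> 'w \<Rightarrow> real) \<Rightarrow> 'i \<Rightarrow> real \<Rightarrow> nat \<Rightarrow> 'w \<Rightarrow> real" where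
  "dyadic_max Z i T n \<omega> = Max ((\<lambda>k. \<bar>Z i (T * real k / 2 ^ n) \<omega>\<bar>) ` {..2 ^ n})"

lemma ennreal_le_dyadic_sum:
  fixes y :: real assumes y0: "y \<ge> 0"
  shows "ennreal y \<le> 1 + (\<Sum>k. ennreal (2 ^ Suc k) * indicator {x::real. 2 ^ k < x} y)"
proof (cases "y \<le> 1")
  case True
  then have "ennreal y \<le> 1" by (simp add: ennreal_le_1)
  then show ?thesis by (rule order_trans) simp
next
  case False
  then have y1: "y > 1" by simp
  obtain n where "y < 2 ^ n" using real_arch_pow[of 2 y] by auto
  then have ex: "\<exists>n. y \<le> (2::real) ^ n" by (auto intro: less_imp_le)
  define m0 where "m0 = (LEAST n. y \<le> (2::real) ^ n)"
  have m0a: "y \<le> 2 ^ m0" unfolding m0_def using ex by (rule LeastI_ex)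
  have m0pos: "m0 > 0" using m0a y1 by (cases m0) auto
  define m where "m = m0 - 1"
  have mSuc: "m0 = Suc m" unfolding m_def using m0pos by simp
  have "\<not> y \<le> 2 ^ m" unfolding m0_def[symmetric, THEN sym] using not_less_Least[of m "\<lambda>n. y \<le> (2::real) ^ n"]
    by (simp add: m0_def[symmetric] mSuc)
  then have lt: "2 ^ m < y" by simp
  define F where "F k = ennreal (2 ^ Suc k) * indicator {x::real. 2 ^ k < x} y" for k
  have "ennreal y \<le> ennreal (2 ^ Suc m)" using m0a mSuc by (simp add: ennreal_leI)
  also have "\<dots> = F m" unfolding F_def using lt by simp
  also have "\<dots> = sum F {m}" by simp
  also have "\<dots> \<le> suminf F"
    by (rule sum_le_suminf) (auto intro: summableI)
  also have "\<dots> \<le> 1 + suminf F" by simp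
  finally show ?thesis unfolding F_def .
qed

lemma dyadic_max_measurable:
  assumes "\<And>t. Z i t \<in> borel_measurable M"
  shows "dyadic_max Z i T n \<in> borel_measurable M"
  unfolding dyadic_max_def using assms by measurable

lemma dyadic_max_ge: "k \<le> 2 ^ n \<Longrightarrow> \<bar>Z i (T * real k / 2 ^ n) \<omega>\<bar> \<le> dyadic_max Z i T n \<omega>"
  unfolding dyadic_max_def by (rule Max_ge) auto

lemma dyadic_max_nonneg: "dyadic_max Z i T n \<omega> \<ge> 0"
  by (rule order_trans[OF abs_ge_zero dyadic_max_ge[of 0]]) simp

lemma dyadic_max_mono: "dyadic_max Z i T n \<omega> \<le> dyadic_max Z i T (Suc n) \<omega>"
  unfolding dyadic_max_def
proof (rule Max_mono)
  show "(\<lambda>k. \<bar>Z i (T * real k / 2 ^ n) \<omega>\<bar>) ` {..2 ^ n} \<subseteq> (\<lambda>k. \<bar>Z i (T * real k / 2 ^ Suc n) \<omega>\<bar>) ` {..2 ^ Suc n}"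
  proof
    fix v assume "v \<in> (\<lambda>k. \<bar>Z i (T * real k / 2 ^ n) \<omega>\<bar>) ` {..2 ^ n}"
    then obtain k where k: "k \<le> 2 ^ n" "v = \<bar>Z i (T * real k / 2 ^ n) \<omega>\<bar>" by auto
    have "T * real (2 * k) / 2 ^ Suc n = T * real k / 2 ^ n" by simp
    moreover have "2 * k \<le> 2 ^ Suc n" using k(1) by simp
    ultimately show "v \<in> (\<lambda>k. \<bar>Z i (T * real k / 2 ^ Suc n) \<omega>\<bar>) ` {..2 ^ Suc n}"
      using k(2) by (metis (no_types, lifting) atMost_iff image_eqI)
  qed
qed auto

lemma dyadic_max_mono_le: "m \<le> n \<Longrightarrow> dyadic_max Z i T m \<omega> \<le> dyadic_max Z i T n \<omega>"
  by (rule lift_Suc_mono_le[of "\<lambda>n. dyadic_max Z i T n \<omega>"]) (rule dyadic_max_mono)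

text \<open>By the reflection inequality the dyadic maximum has the same tail as a single increment.\<close>
lemma dyadic_max_tail:
  assumes sf: "stable_family M \<alpha> Z" and a0: "\<alpha> > 0" and T0: "T \<ge> 0" and b0: "b > 0"
  shows "measure M {\<omega>\<in>space M. b < dyadic_max Z i T n \<omega>} \<le> 4 * 2 powr \<alpha> * T / b powr \<alpha>"
proof -
  interpret prob_space M by (rule stable_family_prob_space[OF sf])
  have [measurable]: "Z i t \<in> borel_measurable M" for t using stable_family_measurable[OF sf] by blast
  define tt where "tt k = T * real k / 2 ^ n" for k
  have inc: "incseq tt" unfolding tt_def incseq_def using T0 by (auto intro!: divide_right_mono mult_left_mono)
  have t0: "tt 0 = 0" unfolding tt_def by simp
  have tT: "tt (2 ^ n) = T" unfolding tt_def by simp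
  have "{\<omega>\<in>space M. b < dyadic_max Z i T n \<omega>} = {\<omega>\<in>space M. \<exists>k\<le>2 ^ n. b < \<bar>Z i (tt k) \<omega>\<bar>}"
    unfolding dyadic_max_def tt_def by (subst Max_gr_iff) auto
  then have "prob {\<omega>\<in>space M. b < dyadic_max Z i T n \<omega>} \<le> 2 * prob {\<omega>\<in>space M. b < \<bar>Z i (tt (2 ^ n)) \<omega>\<bar>}"
    using levy_reflection[OF sf inc t0, of b "2 ^ n" i] b0 by simp
  also have "prob {\<omega>\<in>space M. b < \<bar>Z i (tt (2 ^ n)) \<omega>\<bar>} \<le> prob {\<omega>\<in>space M. b \<le> \<bar>Z i T \<omega> - Z i 0 \<omega>\<bar>}"
    using stable_family_zero[OF sf] tT by (intro finite_measure_mono) auto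
  also have "\<dots> \<le> 2 * 2 powr \<alpha> * (T - 0) / b powr \<alpha>"
    by (rule stable_increment_tail[OF sf a0 _ T0 b0]) simp
  finally show ?thesis by simp
qed

lemma dyadic_tail_identity:
  fixes \<alpha> T :: real and k :: nat
  shows "2 ^ Suc k * (4 * 2 powr \<alpha> * T / (2 ^ k) powr \<alpha>) = 8 * 2 powr \<alpha> * T * (2 / 2 powr \<alpha>) ^ k"
proof -
  have "(2::real) ^ k = 2 powr real k" by (simp add: powr_realpow)
  then have "((2::real) ^ k) powr \<alpha> = 2 powr (real k * \<alpha>)" by (simp add: powr_powr)
  also have "\<dots> = (2 powr \<alpha>) powr real k" by (simp add: powr_powr mult.commute)
  also have "\<dots> = (2 powr \<alpha>) ^ k" by (simp add: powr_realpow)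
  finally have e: "((2::real) ^ k) powr \<alpha> = (2 powr \<alpha>) ^ k" .
  show ?thesis unfolding e by (simp add: power_divide field_simps)
qed

text \<open>The constant K_alpha in E sup_{[0,T]} |Z_i| <= 1 + K_alpha T.\<close>
definition noise_const :: "real \<Rightarrow> real" where
  "noise_const \<alpha> = 8 * 2 powr \<alpha> / (1 - 2 / 2 powr \<alpha>)"

lemma noise_const_nonneg: assumes "\<alpha> > 1" shows "noise_const \<alpha> \<ge> 0"
proof -
  have "2 powr \<alpha> > 2" using powr_less_mono[OF assms, of 2] by simp
  then show ?thesis unfolding noise_const_def by (simp add: field_simps)
qed

text \<open>Mean of the dyadic maximum: E max <= 1 + sum_k 2^{k+1} P(max > 2^k), and the tail bound
  makes the series geometric with ratio 2^{1-alpha} < 1.\<close>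
lemma expected_dyadic_max:
  assumes sf: "stable_family M \<alpha> Z" and a1: "\<alpha> > 1" and T0: "T \<ge> 0"
  shows "(\<integral>\<^sup>+\<omega>. ennreal (dyadic_max Z i T n \<omega>) \<partial>M) \<le> ennreal (1 + noise_const \<alpha> * T)"
proof -
  interpret prob_space M by (rule stable_family_prob_space[OF sf])
  have [measurable]: "Z i t \<in> borel_measurable M" for t using stable_family_measurable[OF sf] by blast
  have [measurable]: "dyadic_max Z i T n \<in> borel_measurable M" by (rule dyadic_max_measurable) simp
  define r where "r = 2 / 2 powr \<alpha>"
  have p2: "2 powr \<alpha> > 2" using powr_less_mono[OF a1, of 2] by simp
  have r0: "0 \<le> r" "r < 1" unfolding r_def using p2 by auto
  define B where "B = 8 * 2 powr \<alpha> * T / (1 - r)"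
  have B: "B = noise_const \<alpha> * T" unfolding B_def r_def noise_const_def by simp
  define F where "F k \<omega> = ennreal (2 ^ Suc k) * indicator {\<omega>\<in>space M. 2 ^ k < dyadic_max Z i T n \<omega>} \<omega>" for k \<omega>
  have Fm[measurable]: "F k \<in> borel_measurable M" for k unfolding F_def by measurable
  have "(\<integral>\<^sup>+\<omega>. ennreal (dyadic_max Z i T n \<omega>) \<partial>M) \<le> (\<integral>\<^sup>+\<omega>. 1 + (\<Sum>k. F k \<omega>) \<partial>M)"
  proof (rule nn_integral_mono)
    fix \<omega> assume "\<omega> \<in> space M"
    then have "(\<Sum>k. ennreal (2 ^ Suc k) * indicator {x::real. 2 ^ k < x} (dyadic_max Z i T n \<omega>)) = (\<Sum>k. F k \<omega>)"
      unfolding F_def by (simp add: indicator_def)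
    then show "ennreal (dyadic_max Z i T n \<omega>) \<le> 1 + (\<Sum>k. F k \<omega>)"
      using ennreal_le_dyadic_sum[OF dyadic_max_nonneg[of Z i T n \<omega>]] by simp
  qed
  also have "\<dots> = (\<integral>\<^sup>+\<omega>. 1 \<partial>M) + (\<integral>\<^sup>+\<omega>. (\<Sum>k. F k \<omega>) \<partial>M)"
    by (rule nn_integral_add) auto
  also have "(\<integral>\<^sup>+\<omega>. (\<Sum>k. F k \<omega>) \<partial>M) = (\<Sum>k. (\<integral>\<^sup>+\<omega>. F k \<omega> \<partial>M))"
    by (rule nn_integral_suminf) simp
  also have "(\<integral>\<^sup>+\<omega>. 1 \<partial>M) = 1" using prob_space by (simp add: emeasure_eq_measure)
  also have "(\<Sum>k. (\<integral>\<^sup>+\<omega>. F k \<omega> \<partial>M)) \<le> (\<Sum>k. ennreal (8 * 2 powr \<alpha> * T * r ^ k))"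
  proof (rule suminf_le)
    fix k
    have "(\<integral>\<^sup>+\<omega>. F k \<omega> \<partial>M) = ennreal (2 ^ Suc k) * emeasure M {\<omega>\<in>space M. 2 ^ k < dyadic_max Z i T n \<omega>}"
      unfolding F_def by (rule nn_integral_cmult_indicator) measurable
    also have "\<dots> = ennreal (2 ^ Suc k) * ennreal (prob {\<omega>\<in>space M. 2 ^ k < dyadic_max Z i T n \<omega>})"
      by (simp add: emeasure_eq_measure)
    also have "\<dots> \<le> ennreal (2 ^ Suc k) * ennreal (4 * 2 powr \<alpha> * T / (2 ^ k) powr \<alpha>)"
      using dyadic_max_tail[OF sf _ T0, of "2 ^ k" i n] a1 by (intro mult_left_mono ennreal_leI) auto
    also have "\<dots> = ennreal (2 ^ Suc k * (4 * 2 powr \<alpha> * T / (2 ^ k) powr \<alpha>))"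
      by (simp add: ennreal_mult'[symmetric])
    also have "\<dots> = ennreal (8 * 2 powr \<alpha> * T * r ^ k)" unfolding r_def by (simp only: dyadic_tail_identity)
    finally show "(\<integral>\<^sup>+\<omega>. F k \<omega> \<partial>M) \<le> ennreal (8 * 2 powr \<alpha> * T * r ^ k)" .
  qed auto
  also have "(\<Sum>k. ennreal (8 * 2 powr \<alpha> * T * r ^ k)) = ennreal (\<Sum>k. 8 * 2 powr \<alpha> * T * r ^ k)"
    using r0 T0 by (intro suminf_ennreal2) (auto intro!: summable_mult summable_geometric)
  also have "(\<Sum>k. 8 * 2 powr \<alpha> * T * r ^ k) = B"
    unfolding B_def using r0 by (simp add: suminf_mult suminf_geometric summable_geometric divide_simps)
  moreover have "B \<ge> 0" unfolding B_def using r0 T0 by simp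
  ultimately show ?thesis unfolding B by (simp add: ennreal_plus)
qed

lemma dyadic_approximation_from_right:
  fixes t T :: real assumes t0: "0 \<le> t" and tT: "t < T"
  obtains kn :: "nat \<Rightarrow> nat" where "\<And>n. kn n \<le> 2 ^ n"
    and "filterlim (\<lambda>n. T * real (kn n) / 2 ^ n) (at_right t) sequentially"
proof -
  have Tp: "T > 0" using t0 tT by simp
  define y where "y n = 2 ^ n * t / T" for n :: nat
  have y0: "y n \<ge> 0" for n unfolding y_def using t0 Tp by simp
  define kn where "kn n = nat \<lfloor>y n\<rfloor> + 1" for n
  define tn where "tn n = T * real (kn n) / 2 ^ n" for n
  have kreal: "real (kn n) = of_int \<lfloor>y n\<rfloor> + 1" for n unfolding kn_def using y0[of n] by simp
  have tn_gt: "tn n > t" for n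
  proof -
    have "y n < real (kn n)" unfolding kreal by linarith
    then have "T * y n / 2 ^ n < T * real (kn n) / 2 ^ n" using Tp by (intro divide_strict_right_mono mult_strict_left_mono) auto
    moreover have "T * y n / 2 ^ n = t" unfolding y_def using Tp by simp
    ultimately show ?thesis unfolding tn_def by simp
  qed
  have tn_le: "tn n \<le> t + T / 2 ^ n" for n
  proof -
    have "real (kn n) \<le> y n + 1" unfolding kreal by linarith
    then have "T * real (kn n) / 2 ^ n \<le> T * (y n + 1) / 2 ^ n" using Tp by (intro divide_right_mono mult_left_mono) auto
    also have "\<dots> = t + T / 2 ^ n" unfolding y_def using Tp by (simp add: field_simps)
    finally show ?thesis unfolding tn_def .
  qed
  have kn_le: "kn n \<le> 2 ^ n" for n
  proof -
    have "y n < 2 ^ n" unfolding y_def using tT Tp by (simp add: field_simps)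
    then have "\<lfloor>y n\<rfloor> < 2 ^ n" by (simp add: floor_less_iff)
    then have "nat \<lfloor>y n\<rfloor> < 2 ^ n" using y0[of n] by (simp add: nat_less_iff)
    then show ?thesis unfolding kn_def by (metis Suc_eq_plus1 Suc_leI)
  qed
  have lim0: "(\<lambda>n. T / 2 ^ n) \<longlonglongrightarrow> 0"
    by (intro tendsto_divide_0[OF tendsto_const] filterlim_realpow_sequentially_gt1) simp
  have tn_lim: "tn \<longlonglongrightarrow> t"
  proof (rule tendsto_sandwich[of "\<lambda>n. t" _ _ "\<lambda>n. t + T / 2 ^ n"])
    show "\<forall>\<^sub>F n in sequentially. t \<le> tn n" using tn_gt by (intro always_eventually) (auto intro: less_imp_le)
    show "\<forall>\<^sub>F n in sequentially. tn n \<le> t + T / 2 ^ n" using tn_le by auto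
    show "(\<lambda>n. t + T / 2 ^ n) \<longlonglongrightarrow> t" using tendsto_add[OF tendsto_const lim0, of t] by simp
  qed simp
  have fl: "filterlim tn (at_right t) sequentially"
    unfolding filterlim_at using tn_lim tn_gt by (auto intro!: always_eventually simp: less_imp_neq[symmetric])
  show ?thesis using kn_le fl unfolding tn_def by (rule that)
qed

lemma right_continuous_dyadic_bound:
  fixes f :: "real \<Rightarrow> real"
  assumes T0: "T \<ge> 0" and rc: "\<And>t. t \<ge> 0 \<Longrightarrow> continuous (at_right t) f"
    and dm: "\<And>n k. k \<le> 2 ^ n \<Longrightarrow> \<bar>f (T * real k / 2 ^ n)\<bar> \<le> s"
    and t: "t \<in> {0..T}"
  shows "\<bar>f t\<bar> \<le> s"
proof (cases "t = T")
  case True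
  then show ?thesis using dm[of 1 0] by simp
next
  case False
  then have tT: "t < T" and t0: "t \<ge> 0" using t by auto
  obtain kn where kn: "\<And>n. kn n \<le> 2 ^ n" and fl: "filterlim (\<lambda>n. T * real (kn n) / 2 ^ n) (at_right t) sequentially"
    using dyadic_approximation_from_right[OF t0 tT] by blast
  have "(f \<longlongrightarrow> f t) (at_right t)" using rc[OF t0] by (simp add: continuous_within)
  then have "(\<lambda>n. \<bar>f (T * real (kn n) / 2 ^ n)\<bar>) \<longlonglongrightarrow> \<bar>f t\<bar>"
    by (intro tendsto_rabs filterlim_compose[OF _ fl])
  moreover have "\<bar>f (T * real (kn n) / 2 ^ n)\<bar> \<le> s" for n by (rule dm[OF kn])
  ultimately show ?thesis by (intro LIMSEQ_le_const2[of _ _ s]) auto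
qed

text \<open>The supremum of |Z_i| over the dyadic points of [0,T]; for right-continuous paths it
  dominates |Z_i| on the whole interval.\<close>
definition noise_sup :: "('i \<Rightarrow> real \<Rightarrow> 'w \<Rightarrow> real) \<Rightarrow> 'i \<Rightarrow> real \<Rightarrow> 'w \<Rightarrow> ennreal" where
  "noise_sup Z i T \<omega> = (SUP n. ennreal (dyadic_max Z i T n \<omega>))"

lemma noise_sup_measurable [measurable]:
  assumes "\<And>t. Z i t \<in> borel_measurable M"
  shows "noise_sup Z i T \<in> borel_measurable M"
proof -
  have [measurable]: "dyadic_max Z i T n \<in> borel_measurable M" for n
    by (intro dyadic_max_measurable assms)
  show ?thesis unfolding noise_sup_def by measurable
qed

lemma noise_sup_dominates:
  assumes T0: "T \<ge> 0" and rc: "\<forall>t\<ge>0. continuous (at_right t) (\<lambda>s. Z i s \<omega>)"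
    and fin: "noise_sup Z i T \<omega> \<noteq> \<infinity>" and t: "t \<in> {0..T}"
  shows "\<bar>Z i t \<omega>\<bar> \<le> enn2real (noise_sup Z i T \<omega>)"
proof (rule right_continuous_dyadic_bound[OF T0 _ _ t])
  show "continuous (at_right t) (\<lambda>s. Z i s \<omega>)" if "t \<ge> 0" for t using rc that by blast
  fix n k :: nat assume k: "k \<le> 2 ^ n"
  have "ennreal (dyadic_max Z i T n \<omega>) \<le> noise_sup Z i T \<omega>"
    unfolding noise_sup_def by (rule SUP_upper) simp
  also have "\<dots> = ennreal (enn2real (noise_sup Z i T \<omega>))" using fin by (simp add: less_top)
  finally have "dyadic_max Z i T n \<omega> \<le> enn2real (noise_sup Z i T \<omega>)" by simp
  then show "\<bar>Z i (T * real k / 2 ^ n) \<omega>\<bar> \<le> enn2real (noise_sup Z i T \<omega>)"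
    using dyadic_max_ge[OF k] by (rule order_trans[rotated])
qed

lemma expected_noise_sup:
  assumes sf: "stable_family M \<alpha> Z" and \<alpha>: "\<alpha> > 1" and T0: "T \<ge> 0"
  shows "(\<integral>\<^sup>+\<omega>. noise_sup Z i T \<omega> \<partial>M) \<le> ennreal (1 + noise_const \<alpha> * T)"
proof -
  have [measurable]: "Z i t \<in> borel_measurable M" for t using stable_family_measurable[OF sf] by blast
  have [measurable]: "dyadic_max Z i T n \<in> borel_measurable M" for n by (rule dyadic_max_measurable) simp
  have "(\<integral>\<^sup>+\<omega>. noise_sup Z i T \<omega> \<partial>M) = (SUP n. \<integral>\<^sup>+\<omega>. ennreal (dyadic_max Z i T n \<omega>) \<partial>M)"
    unfolding noise_sup_def
    by (rule nn_integral_monotone_convergence_SUP) (auto simp: incseq_def le_fun_def intro!: ennreal_leI dyadic_max_mono_le)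
  also have "\<dots> \<le> ennreal (1 + noise_const \<alpha> * T)"
    by (rule SUP_least) (rule expected_dyadic_max[OF sf \<alpha> T0])
  finally show ?thesis .
qed

section \<open>Neumann series of a nonnegative kernel\<close>

text \<open>kernel_iter G c n B is the vector (c^T)^n B restricted to the finite index set G, i.e.
  iterated column sums with the kernel c; kernel_iter_enn is the same in ennreal, where
  sums and integrals commute without integrability side conditions.\<close>
primrec kernel_iter :: "'i set \<Rightarrow> ('i \<Rightarrow> 'i \<Rightarrow> real) \<Rightarrow> nat \<Rightarrow> ('i \<Rightarrow> real) \<Rightarrow> 'i \<Rightarrow> real" where
  "kernel_iter G c 0 B = B"
| "kernel_iter G c (Suc n) B = (\<lambda>i. \<Sum>j\<in>G. c j i * kernel_iter G c n B j)"

primrec kernel_iter_enn :: "'i set \<Rightarrow> ('i \<Rightarrow> 'i \<Rightarrow> real) \<Rightarrow> nat \<Rightarrow> ('i \<Rightarrow> ennreal) \<Rightarrow> 'i \<Rightarrow> ennreal" where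
  "kernel_iter_enn G c 0 B = B"
| "kernel_iter_enn G c (Suc n) B = (\<lambda>i. \<Sum>j\<in>G. ennreal (c j i) * kernel_iter_enn G c n B j)"

lemma kernel_iter_nonneg:
  assumes "\<And>j i. c j i \<ge> 0" "\<And>j. B j \<ge> 0"
  shows "kernel_iter G c n B i \<ge> 0"
  using assms by (induction n arbitrary: i) (auto intro!: sum_nonneg mult_nonneg_nonneg)

lemma kernel_iter_bound:
  assumes c0: "\<And>j i. c j i \<ge> 0" and B0: "\<And>j. B j \<ge> 0" and Bb: "\<And>j. B j \<le> Bm"
    and cs: "\<And>i. (\<Sum>j\<in>G. c j i) \<le> q" and q0: "q \<ge> 0"
  shows "kernel_iter G c n B i \<le> q ^ n * Bm"
proof (induction n arbitrary: i)
  case 0 then show ?case using Bb by simp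
next
  case (Suc n)
  have "kernel_iter G c (Suc n) B i = (\<Sum>j\<in>G. c j i * kernel_iter G c n B j)" by simp
  also have "\<dots> \<le> (\<Sum>j\<in>G. c j i * (q ^ n * Bm))"
    by (intro sum_mono mult_left_mono Suc c0)
  also have "\<dots> = (\<Sum>j\<in>G. c j i) * (q ^ n * Bm)" by (simp add: sum_distrib_right)
  also have "\<dots> \<le> q * (q ^ n * Bm)"
  proof (rule mult_right_mono[OF cs])
    have "0 \<le> B i" by (rule B0)
    also have "\<dots> \<le> Bm" by (rule Bb)
    finally show "0 \<le> q ^ n * Bm" using q0 by simp
  qed
  also have "\<dots> = q ^ Suc n * Bm" by simp
  finally show ?case .
qed

lemma kernel_iter_summable:
  assumes c0: "\<And>j i. c j i \<ge> 0" and B0: "\<And>j. B j \<ge> 0" and Bb: "\<And>j. B j \<le> Bm"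
    and cs: "\<And>i. (\<Sum>j\<in>G. c j i) \<le> q" and q0: "q \<ge> 0" and q1: "q < 1"
  shows "summable (\<lambda>n. kernel_iter G c n B i)"
proof (rule summable_comparison_test')
  show "summable (\<lambda>n. q ^ n * Bm)" using q0 q1 by (intro summable_mult2 summable_geometric) simp
  fix n
  have "kernel_iter G c n B i \<ge> 0" by (rule kernel_iter_nonneg[of c B]) (auto intro: c0 B0)
  moreover have "kernel_iter G c n B i \<le> q ^ n * Bm" by (rule kernel_iter_bound[of c B Bm G q]) (auto intro: c0 B0 Bb cs q0)
  ultimately show "norm (kernel_iter G c n B i) \<le> q ^ n * Bm" by simp
qed

lemma kernel_iter_fixpoint:
  assumes fin: "finite G" and c0: "\<And>j i. c j i \<ge> 0" and B0: "\<And>j. B j \<ge> 0" and Bb: "\<And>j. B j \<le> Bm"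
    and cs: "\<And>i. (\<Sum>j\<in>G. c j i) \<le> q" and q0: "q \<ge> 0" and q1: "q < 1"
  shows "(\<Sum>j\<in>G. c j i * (\<Sum>n. kernel_iter G c n B j)) = (\<Sum>n. kernel_iter G c n B i) - B i"
proof -
  have sm: "summable (\<lambda>n. kernel_iter G c n B j)" for j by (rule kernel_iter_summable[OF c0 B0 Bb cs q0 q1])
  have "(\<Sum>j\<in>G. c j i * (\<Sum>n. kernel_iter G c n B j)) = (\<Sum>j\<in>G. (\<Sum>n. c j i * kernel_iter G c n B j))"
    using sm by (simp add: suminf_mult)
  also have "\<dots> = (\<Sum>n. \<Sum>j\<in>G. c j i * kernel_iter G c n B j)"
    by (rule suminf_sum[symmetric]) (use sm in \<open>auto intro: summable_mult\<close>)
  also have "\<dots> = (\<Sum>n. kernel_iter G c (Suc n) B i)" by simp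
  also have "\<dots> = (\<Sum>n. kernel_iter G c n B i) - kernel_iter G c 0 B i"
    by (rule suminf_split_head[OF sm])
  finally show ?thesis by simp
qed

lemma kernel_iter_ge_B:
  assumes c0: "\<And>j i. c j i \<ge> 0" and B0: "\<And>j. B j \<ge> 0" and Bb: "\<And>j. B j \<le> Bm"
    and cs: "\<And>i. (\<Sum>j\<in>G. c j i) \<le> q" and q0: "q \<ge> 0" and q1: "q < 1"
  shows "B i \<le> (\<Sum>n. kernel_iter G c n B i)"
proof -
  have "(\<Sum>n\<in>{0}. kernel_iter G c n B i) \<le> (\<Sum>n. kernel_iter G c n B i)"
    by (rule sum_le_suminf[OF kernel_iter_summable[OF c0 B0 Bb cs q0 q1]]) (auto intro: kernel_iter_nonneg[of c B] c0 B0)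
  then show ?thesis by simp
qed

lemma kernel_iter_enn_ennreal:
  assumes c0: "\<And>j i. c j i \<ge> 0" and B0: "\<And>j. B j \<ge> 0"
  shows "kernel_iter_enn G c n (\<lambda>j. ennreal (B j)) i = ennreal (kernel_iter G c n B i)"
proof (induction n arbitrary: i)
  case 0 then show ?case by simp
next
  case (Suc n)
  have pn: "\<And>j. kernel_iter G c n B j \<ge> 0" by (rule kernel_iter_nonneg[of c B]) (auto intro: c0 B0)
  have "kernel_iter_enn G c (Suc n) (\<lambda>j. ennreal (B j)) i = (\<Sum>j\<in>G. ennreal (c j i) * ennreal (kernel_iter G c n B j))"
    using Suc by simp
  also have "\<dots> = (\<Sum>j\<in>G. ennreal (c j i * kernel_iter G c n B j))"
    using c0 pn by (simp add: ennreal_mult)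
  also have "\<dots> = ennreal (\<Sum>j\<in>G. c j i * kernel_iter G c n B j)"
    using c0 pn by (intro sum_ennreal) auto
  finally show ?case by simp
qed

lemma kernel_iter_enn_mono:
  assumes "\<And>j. B j \<le> B' j"
  shows "kernel_iter_enn G c n B i \<le> kernel_iter_enn G c n B' i"
  using assms by (induction n arbitrary: i) (auto intro!: sum_mono mult_left_mono)

lemma kernel_iter_enn_weight:
  assumes c0: "\<And>j i. c j i \<ge> 0" and W0: "\<And>j. W j \<ge> 0"
    and cw: "\<And>i. (\<Sum>j\<in>G. c j i * W j) \<le> q * W i" and q0: "q \<ge> 0"
  shows "kernel_iter_enn G c n (\<lambda>j. ennreal (W j)) i \<le> ennreal (q ^ n * W i)"
proof (induction n arbitrary: i)
  case 0 then show ?case by simp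
next
  case (Suc n)
  have "kernel_iter_enn G c (Suc n) (\<lambda>j. ennreal (W j)) i \<le> (\<Sum>j\<in>G. ennreal (c j i) * ennreal (q ^ n * W j))"
    using Suc by (auto intro!: sum_mono mult_left_mono)
  also have "\<dots> = ennreal (\<Sum>j\<in>G. c j i * (q ^ n * W j))"
    using c0 W0 q0 by (subst sum_ennreal[symmetric]) (auto simp: ennreal_mult)
  also have "(\<Sum>j\<in>G. c j i * (q ^ n * W j)) = q ^ n * (\<Sum>j\<in>G. c j i * W j)"
    by (simp add: sum_distrib_left algebra_simps)
  also have "\<dots> \<le> q ^ n * (q * W i)" using cw q0 by (intro mult_left_mono) auto
  also have "\<dots> = q ^ Suc n * W i" by simp
  finally show ?case by (simp add: ennreal_leI)
qed

lemma kernel_iter_enn_meas: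
  assumes "\<And>j. (\<lambda>\<omega>. B j \<omega>) \<in> borel_measurable M"
  shows "(\<lambda>\<omega>. kernel_iter_enn G c n (\<lambda>j. B j \<omega>) i) \<in> borel_measurable M"
  using assms by (induction n arbitrary: i) auto

lemma kernel_iter_enn_integral:
  assumes fin: "finite G" and m: "\<And>j. (\<lambda>\<omega>. B j \<omega>) \<in> borel_measurable M"
  shows "(\<integral>\<^sup>+\<omega>. kernel_iter_enn G c n (\<lambda>j. B j \<omega>) i \<partial>M) = kernel_iter_enn G c n (\<lambda>j. \<integral>\<^sup>+\<omega>. B j \<omega> \<partial>M) i"
proof (induction n arbitrary: i)
  case 0 then show ?case by simp
next
  case (Suc n)
  have [measurable]: "\<And>n i. (\<lambda>\<omega>. kernel_iter_enn G c n (\<lambda>j. B j \<omega>) i) \<in> borel_measurable M" by (rule kernel_iter_enn_meas[OF m])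
  have "(\<integral>\<^sup>+\<omega>. kernel_iter_enn G c (Suc n) (\<lambda>j. B j \<omega>) i \<partial>M) = (\<integral>\<^sup>+\<omega>. (\<Sum>j\<in>G. ennreal (c j i) * kernel_iter_enn G c n (\<lambda>j. B j \<omega>) j) \<partial>M)"
    by simp
  also have "\<dots> = (\<Sum>j\<in>G. \<integral>\<^sup>+\<omega>. ennreal (c j i) * kernel_iter_enn G c n (\<lambda>j. B j \<omega>) j \<partial>M)"
    by (rule nn_integral_sum) measurable
  also have "\<dots> = (\<Sum>j\<in>G. ennreal (c j i) * \<integral>\<^sup>+\<omega>. kernel_iter_enn G c n (\<lambda>j. B j \<omega>) j \<partial>M)"
    by (rule sum.cong) (auto intro!: nn_integral_cmult)
  also have "\<dots> = kernel_iter_enn G c (Suc n) (\<lambda>j. \<integral>\<^sup>+\<omega>. B j \<omega> \<partial>M) i" using Suc by simp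
  finally show ?case .
qed

lemma kernel_series_ennreal:
  assumes c0: "\<And>j i. c j i \<ge> 0" and B0: "\<And>j. B j \<ge> 0" and Bb: "\<And>j. B j \<le> Bm"
    and cs: "\<And>i. (\<Sum>j\<in>G. c j i) \<le> q" and q: "q \<ge> 0" "q < 1"
  shows "ennreal (\<Sum>n. kernel_iter G c n B i) = (\<Sum>n. kernel_iter_enn G c n (\<lambda>j. ennreal (B j)) i)"
  using kernel_iter_summable[OF c0 B0 Bb cs q] kernel_iter_nonneg[of c B, OF c0 B0]
  by (simp add: suminf_ennreal2 kernel_iter_enn_ennreal[OF c0 B0])

lemma expected_kernel_series:
  assumes fin: "finite G" and c0: "\<And>j i. c j i \<ge> 0"
    and B_meas: "\<And>j. (\<lambda>\<omega>. B j \<omega>) \<in> borel_measurable M"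
    and EB: "\<And>j. (\<integral>\<^sup>+\<omega>. B j \<omega> \<partial>M) \<le> ennreal (\<beta> * W j)"
    and W0: "\<And>j. W j \<ge> 0" and \<beta>: "\<beta> \<ge> 0"
    and cw: "\<And>i. (\<Sum>j\<in>G. c j i * W j) \<le> q * W i" and q: "q \<ge> 0" "q < 1"
  shows "(\<integral>\<^sup>+\<omega>. (\<Sum>n. kernel_iter_enn G c n (\<lambda>j. B j \<omega>) i) \<partial>M) \<le> ennreal (\<beta> * W i / (1 - q))"
proof -
  have \<beta>W: "(\<Sum>j\<in>G. c j i * (\<beta> * W j)) \<le> q * (\<beta> * W i)" for i
    using mult_left_mono[OF cw[of i] \<beta>] by (simp add: sum_distrib_left algebra_simps)
  have "(\<integral>\<^sup>+\<omega>. (\<Sum>n. kernel_iter_enn G c n (\<lambda>j. B j \<omega>) i) \<partial>M)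
      = (\<Sum>n. kernel_iter_enn G c n (\<lambda>j. \<integral>\<^sup>+\<omega>. B j \<omega> \<partial>M) i)"
    by (simp add: nn_integral_suminf kernel_iter_enn_meas[OF B_meas] kernel_iter_enn_integral[OF fin B_meas])
  also have "\<dots> \<le> (\<Sum>n. kernel_iter_enn G c n (\<lambda>j. ennreal (\<beta> * W j)) i)"
    by (intro suminf_le kernel_iter_enn_mono EB) auto
  also have "\<dots> \<le> (\<Sum>n. ennreal (q ^ n * (\<beta> * W i)))"
    using W0 \<beta> q by (intro suminf_le kernel_iter_enn_weight[OF c0] \<beta>W) auto
  also have "\<dots> = ennreal (\<Sum>n. q ^ n * (\<beta> * W i))"
    using q \<beta> W0[of i] by (intro suminf_ennreal2) (auto intro!: summable_mult2 summable_geometric)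
  also have "(\<Sum>n. q ^ n * (\<beta> * W i)) = \<beta> * W i / (1 - q)"
    using q by (simp add: suminf_mult2[symmetric] summable_geometric suminf_geometric)
  finally show ?thesis .
qed

section \<open>The truncated system\<close>

lemma A2_sign:
  assumes "A2 J \<kappa> \<kappa>'"
  shows "v > 0 \<Longrightarrow> J j v \<le> 0" and "v < 0 \<Longrightarrow> J j v \<ge> 0"
proof -
  have d: "\<exists>D. DERIV (J j) y :> D \<and> D \<le> 0" for y using assms unfolding A2_def by blast
  have z: "J j 0 = 0" using assms unfolding A2_def by blast
  show "v > 0 \<Longrightarrow> J j v \<le> 0"
    using DERIV_nonpos_imp_nonincreasing[of 0 v "J j"] d z by auto
  show "v < 0 \<Longrightarrow> J j v \<ge> 0"
    using DERIV_nonpos_imp_nonincreasing[of v 0 "J j"] d z by auto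
qed

lemma finitely_supported_in_BB:
  fixes y :: "('d::finite \<Rightarrow> int) \<Rightarrow> real"
  assumes "finite G"
  shows "(\<lambda>k. if k \<in> G then y k else 0) \<in> BB"
proof -
  define R' where "R' = 1 + (\<Sum>k\<in>G. \<bar>y k\<bar>)"
  have R'0: "R' > 0" unfolding R'_def by (simp add: add_pos_nonneg sum_nonneg)
  have "(\<lambda>k. if k \<in> G then y k else 0) \<in> BRrho R' 1"
    unfolding BRrho_def
  proof (intro CollectI allI)
    fix k :: "'d \<Rightarrow> int"
    have ln: "l1norm k \<ge> 0" unfolding l1norm_def by (simp add: sum_nonneg)
    have "\<bar>if k \<in> G then y k else 0\<bar> \<le> (\<Sum>k\<in>G. \<bar>y k\<bar>)"
      using assms by (auto intro: member_le_sum)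
    also have "\<dots> \<le> R'" unfolding R'_def by simp
    also have "\<dots> \<le> R' * (l1norm k + 1)" using R'0 ln by simp
    also have "\<dots> = R' * (l1norm k + 1) powr 1" using ln by simp
    finally show "\<bar>if k \<in> G then y k else 0\<bar> \<le> R' * (l1norm k + 1) powr 1" .
  qed
  moreover have "(1::real) \<in> {0<..}" "R' \<in> {0<..}" using R'0 by auto
  ultimately show ?thesis unfolding BB_def by blast
qed

lemma A1_interaction_bound:
  fixes y :: "('d::finite \<Rightarrow> int) \<Rightarrow> real"
  assumes A: "A1 a I" and fin: "finite G"
  shows "\<bar>I j (\<lambda>k. if k \<in> G then y k else 0)\<bar> \<le> (\<Sum>k\<in>G. a k j * \<bar>y k\<bar>)"
proof -
  have B1: "(\<lambda>k. if k \<in> G then y k else 0) \<in> BB" by (rule finitely_supported_in_BB[OF fin])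
  have B0: "(\<lambda>_::'d \<Rightarrow> int. 0::real) \<in> BB" using finitely_supported_in_BB[OF fin, of "\<lambda>_. 0"] by simp
  have L: "\<bar>I j (\<lambda>k. if k \<in> G then y k else 0) - I j (\<lambda>_. 0)\<bar>
      \<le> (\<Sum>\<^sub>\<infinity>k. a k j * \<bar>(if k \<in> G then y k else 0) - 0\<bar>)"
    using A B1 B0 unfolding A1_def by blast
  have z: "I j (\<lambda>_. 0) = 0" using A unfolding A1_def by blast
  have "(\<Sum>\<^sub>\<infinity>k. a k j * \<bar>(if k \<in> G then y k else 0) - 0\<bar>) = (\<Sum>\<^sub>\<infinity>k\<in>G. a k j * \<bar>y k\<bar>)"
    by (rule infsum_cong_neutral) auto
  also have "\<dots> = (\<Sum>k\<in>G. a k j * \<bar>y k\<bar>)" using fin by simp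
  finally show ?thesis using L z by simp
qed

lemma finite_GammaN: "finite (GammaN N :: ('d::finite \<Rightarrow> int) set)"
proof -
  have "GammaN N \<subseteq> PiE (UNIV :: 'd set) (\<lambda>_. {- int N..int N})"
  proof
    fix g :: "'d \<Rightarrow> int" assume "g \<in> GammaN N"
    then have "\<bar>g k\<bar> \<le> int N" for k unfolding GammaN_def by auto
    then have h: "g k \<in> {- int N..int N}" for k using abs_le_iff[of "g k" "int N"] by auto
    then show "g \<in> PiE (UNIV :: 'd set) (\<lambda>_. {- int N..int N})"
      by (simp add: PiE_iff)
  qed
  moreover have "finite (PiE (UNIV :: 'd set) (\<lambda>_. {- int N..int N}))" by (simp add: finite_PiE)
  ultimately show ?thesis by (rule finite_subset)
qed

text \<open>The pathwise estimate for the truncated system, obtained from the comparison principle with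
  lam = 1 + eta(a) and V the Neumann series of B_j = |x_j| + 2 s_j for the kernel a/lam
  (whose column sums are at most eta/(1+eta) < 1).\<close>
lemma truncated_pathwise_bound:
  fixes G :: "('d::finite \<Rightarrow> int) set" and X z :: "('d \<Rightarrow> int) \<Rightarrow> real \<Rightarrow> real"
  assumes A: "A1 a I" and Jc: "A2 J \<kappa> \<kappa>'" and finG: "finite G" and T0: "T \<ge> 0"
    and int: "\<And>j t. j \<in> G \<Longrightarrow> t \<in> {0..T} \<Longrightarrow>
      ((\<lambda>s. J j (X j s) + I j (\<lambda>k. if k \<in> G then X k s else 0)) has_integral (X j t - x j - z j t)) {0..t}"
    and zb: "\<And>j t. j \<in> G \<Longrightarrow> t \<in> {0..T} \<Longrightarrow> \<bar>z j t\<bar> \<le> s j"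
    and s0: "\<And>j. s j \<ge> 0" and i: "i \<in> G"
  shows "ennreal \<bar>X i T\<bar> \<le> ennreal (exp ((1 + eta a) * T)) *
    (\<Sum>n. kernel_iter_enn G (\<lambda>j i. a j i / (1 + eta a)) n (\<lambda>j. ennreal (if j \<in> G then \<bar>x j\<bar> + 2 * s j else 0)) i)"
proof -
  define lam where "lam = 1 + eta a"
  have lam: "lam > 0" "eta a / lam < 1" unfolding lam_def using A1_eta_nonneg[OF A] by auto
  define c where "c j i = a j i / lam" for j i
  define B where "B j = (if j \<in> G then \<bar>x j\<bar> + 2 * s j else 0)" for j
  define V where "V j = (\<Sum>n. kernel_iter G c n B j)" for j
  have c0: "c j i \<ge> 0" for j i unfolding c_def using A1_coeff(1)[OF A] lam by simp
  have B0: "B j \<ge> 0" for j unfolding B_def using s0[of j] by simp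
  have Bb: "B j \<le> (\<Sum>k\<in>G. B k)" for j
  proof (cases "j \<in> G")
    case True then show ?thesis using finG B0 by (intro member_le_sum) auto
  next
    case False then have "B j = 0" unfolding B_def by simp
    then show ?thesis using B0 by (simp add: sum_nonneg)
  qed
  have cs: "(\<Sum>j\<in>G. c j i) \<le> eta a / lam" for i
    unfolding c_def using A1_column_sum_le_eta[OF A finG] lam
    by (simp add: sum_divide_distrib[symmetric] divide_right_mono)
  have q: "eta a / lam \<ge> 0" using A1_eta_nonneg[OF A] lam by simp
  note neumann = c0 B0 Bb cs q lam(2)
  have "\<bar>X i T\<bar> \<le> exp (lam * T) * V i"
  proof (rule comparison_bound[OF finG T0 _ int zb _ _ A1_coeff(1)[OF A] _ _ _ i])
    show "lam \<ge> 0" using lam by simp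
    show "J j (X j t) + I j (\<lambda>k. if k \<in> G then X k t else 0) \<le> (\<Sum>k\<in>G. a k j * \<bar>X k t\<bar>)"
      if "X j t > 0" for j t
      using A2_sign(1)[OF Jc that, of j] A1_interaction_bound[OF A finG, of j "\<lambda>k. X k t"] by linarith
    show "- (J j (X j t) + I j (\<lambda>k. if k \<in> G then X k t else 0)) \<le> (\<Sum>k\<in>G. a k j * \<bar>X k t\<bar>)"
      if "X j t < 0" for j t
      using A2_sign(2)[OF Jc that, of j] A1_interaction_bound[OF A finG, of j "\<lambda>k. X k t"] by linarith
    show "V j \<ge> \<bar>x j\<bar> + 2 * s j" if "j \<in> G" for j
      using kernel_iter_ge_B[where c=c and B=B and G=G, OF neumann, of j] that unfolding V_def B_def by simp
    show "(\<Sum>k\<in>G. a k j * V k) \<le> lam * V j" for j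
    proof -
      have "(\<Sum>k\<in>G. a k j * V k) = lam * (\<Sum>k\<in>G. c k j * V k)"
        unfolding c_def using lam by (simp add: sum_distrib_left)
      also have "\<dots> = lam * (V j - B j)" unfolding V_def by (simp add: kernel_iter_fixpoint[where c=c and B=B, OF finG neumann])
      also have "\<dots> \<le> lam * V j" using B0[of j] lam by (simp add: mult_left_mono)
      finally show ?thesis .
    qed
    show "(\<Sum>k\<in>G. a k j) \<le> lam" for j
      using A1_column_sum_le_eta[OF A finG, of j] unfolding lam_def by simp
  qed
  then have "ennreal \<bar>X i T\<bar> \<le> ennreal (exp (lam * T)) * ennreal (V i)"
    by (simp add: ennreal_mult'[symmetric] ennreal_leI)
  also have "ennreal (V i) = (\<Sum>n. kernel_iter_enn G c n (\<lambda>j. ennreal (B j)) i)"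
    unfolding V_def by (rule kernel_series_ennreal[where c=c and B=B and G=G, OF neumann])
  finally show ?thesis unfolding c_def B_def lam_def .
qed

section \<open>The moment bound\<close>

definition comparison_data ::
    "('i \<Rightarrow> real) \<Rightarrow> ('i \<Rightarrow> real \<Rightarrow> 'w \<Rightarrow> real) \<Rightarrow> 'i set \<Rightarrow> real \<Rightarrow> 'i \<Rightarrow> 'w \<Rightarrow> ennreal" where
  "comparison_data x Z G T j \<omega> = (if j \<in> G then ennreal \<bar>x j\<bar> + 2 * noise_sup Z j T \<omega> else 0)"

lemma comparison_data_measurable [measurable]:
  assumes "\<And>t. Z j t \<in> borel_measurable M"
  shows "comparison_data x Z G T j \<in> borel_measurable M"
  unfolding comparison_data_def using assms by measurable

text \<open>Almost surely the noise has finite supremum and right-continuous paths, so the pathwise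
  estimate applies with s_j = sup |Z_j|.\<close>
lemma truncated_pathwise_bound_AE:
  fixes M :: "'w measure" and Z :: "('d::finite \<Rightarrow> int) \<Rightarrow> real \<Rightarrow> 'w \<Rightarrow> real"
  assumes sf: "stable_family M \<alpha> Z" and A: "A1 a I" and Jc: "A2 J \<kappa> \<kappa>'"
    and sol: "solves_N M Z J I N x X" and \<alpha>: "\<alpha> > 1" and i: "i \<in> GammaN N" and T0: "T \<ge> 0"
  shows "AE \<omega> in M. ennreal \<bar>X i T \<omega>\<bar> \<le> ennreal (exp ((1 + eta a) * T)) *
    (\<Sum>n. kernel_iter_enn (GammaN N) (\<lambda>j i. a j i / (1 + eta a)) n (\<lambda>j. comparison_data x Z (GammaN N) T j \<omega>) i)"
proof -
  interpret prob_space M by (rule stable_family_prob_space[OF sf])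
  have [measurable]: "Z j t \<in> borel_measurable M" for j t using stable_family_measurable[OF sf] by blast
  have finG: "finite (GammaN N :: ('d \<Rightarrow> int) set)" by (rule finite_GammaN)
  have noise_fin: "AE \<omega> in M. \<forall>j\<in>GammaN N. noise_sup Z j T \<omega> \<noteq> \<infinity>"
    using neq_top_trans[OF ennreal_neq_top expected_noise_sup[OF sf \<alpha> T0]]
    by (intro AE_finite_allI[OF finG] nn_integral_noteq_infinite) auto
  have right_cont: "AE \<omega> in M. \<forall>j\<in>GammaN N. \<forall>t\<ge>0. continuous (at_right t) (\<lambda>s. Z j s \<omega>)"
    by (rule AE_finite_allI[OF finG]) (rule stable_family_right_continuous[OF sf])
  have solution: "AE \<omega> in M. \<forall>j\<in>GammaN N. \<forall>t\<ge>0.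
      ((\<lambda>s. J j (X j s \<omega>) + I j (\<lambda>k. if k \<in> GammaN N then X k s \<omega> else 0))
        has_integral (X j t \<omega> - x j - Z j t \<omega>)) {0..t}"
    using sol unfolding solves_N_def by blast
  show ?thesis using noise_fin right_cont solution
  proof eventually_elim
    case (elim \<omega>)
    define s where "s j = enn2real (noise_sup Z j T \<omega>)" for j
    have "\<bar>Z j t \<omega>\<bar> \<le> s j" if "j \<in> GammaN N" "t \<in> {0..T}" for j t
      unfolding s_def using elim that by (intro noise_sup_dominates[OF T0]) auto
    then have "ennreal \<bar>X i T \<omega>\<bar> \<le> ennreal (exp ((1 + eta a) * T)) * (\<Sum>n. kernel_iter_enn (GammaN N)
        (\<lambda>j i. a j i / (1 + eta a)) n (\<lambda>j. ennreal (if j \<in> GammaN N then \<bar>x j\<bar> + 2 * s j else 0)) i)"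
      using elim i by (intro truncated_pathwise_bound[OF A Jc finG T0]) (auto simp: s_def)
    moreover have "(\<lambda>j. ennreal (if j \<in> GammaN N then \<bar>x j\<bar> + 2 * s j else 0))
        = (\<lambda>j. comparison_data x Z (GammaN N) T j \<omega>)"
      using elim(1) unfolding comparison_data_def s_def
      by (auto simp: ennreal_plus ennreal_mult less_top[symmetric])
    ultimately show ?case by simp
  qed
qed

lemma expected_comparison_data:
  assumes sf: "stable_family M \<alpha> Z" and \<alpha>: "\<alpha> > 1" and T0: "T \<ge> 0"
    and xB: "x \<in> BRrho R \<rho>" and R: "R > 0" and \<rho>: "\<rho> > 0" and L: "L \<ge> 1"
  shows "(\<integral>\<^sup>+\<omega>. comparison_data x Z G T j \<omega> \<partial>M)
    \<le> ennreal ((R + 2 + 2 * noise_const \<alpha> * T) * (L + l1norm j) powr \<rho>)"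
proof -
  interpret prob_space M by (rule stable_family_prob_space[OF sf])
  have [measurable]: "Z j t \<in> borel_measurable M" for t using stable_family_measurable[OF sf] by blast
  define W where "W = (L + l1norm j) powr \<rho>"
  have W1: "W \<ge> 1" unfolding W_def using L l1norm_nonneg[of j] \<rho> by (simp add: ge_one_powr_ge_zero)
  have K: "noise_const \<alpha> * T \<ge> 0" using noise_const_nonneg[OF \<alpha>] T0 by simp
  have "(\<integral>\<^sup>+\<omega>. comparison_data x Z G T j \<omega> \<partial>M) \<le> (\<integral>\<^sup>+\<omega>. ennreal \<bar>x j\<bar> + 2 * noise_sup Z j T \<omega> \<partial>M)"
    by (intro nn_integral_mono) (simp add: comparison_data_def)
  also have "\<dots> = ennreal \<bar>x j\<bar> + 2 * (\<integral>\<^sup>+\<omega>. noise_sup Z j T \<omega> \<partial>M)"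
    by (simp add: nn_integral_add nn_integral_cmult emeasure_space_1)
  also have "\<dots> \<le> ennreal \<bar>x j\<bar> + 2 * ennreal (1 + noise_const \<alpha> * T)"
    using expected_noise_sup[OF sf \<alpha> T0, of j] by (intro add_left_mono mult_left_mono) auto
  also have "\<dots> = ennreal (\<bar>x j\<bar> + 2 * (1 + noise_const \<alpha> * T))"
    using K by (simp add: ennreal_plus ennreal_mult)
  also have "\<dots> \<le> ennreal ((R + 2 + 2 * noise_const \<alpha> * T) * W)"
  proof (rule ennreal_leI)
    have "\<bar>x j\<bar> \<le> R * (l1norm j + 1) powr \<rho>" using xB unfolding BRrho_def by blast
    also have "\<dots> \<le> R * W" unfolding W_def using R \<rho> L l1norm_nonneg[of j]
      by (intro mult_left_mono powr_mono2) auto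
    moreover have "2 + 2 * noise_const \<alpha> * T \<le> (2 + 2 * noise_const \<alpha> * T) * W"
      using mult_left_mono[OF W1, of "2 + 2 * noise_const \<alpha> * T"] K by simp
    ultimately show "\<bar>x j\<bar> + 2 * (1 + noise_const \<alpha> * T) \<le> (R + 2 + 2 * noise_const \<alpha> * T) * W"
      by (simp add: algebra_simps)
  qed
  finally show ?thesis unfolding W_def .
qed

text \<open>The moment bound for the truncated system: the kernel a/(1+eta) contracts the weight
  W_j = (L + |j|)^rho with ratio (eta + 1/2)/(1 + eta), which produces the factor 2 (1 + eta).\<close>
lemma truncated_moment_bound:
  fixes M :: "'w measure" and Z :: "('d::finite \<Rightarrow> int) \<Rightarrow> real \<Rightarrow> 'w \<Rightarrow> real"
    and a :: "('d \<Rightarrow> int) \<Rightarrow> ('d \<Rightarrow> int) \<Rightarrow> real"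
  assumes sf: "stable_family M \<alpha> Z" and A: "A1 a I" and Jc: "A2 J \<kappa> \<kappa>'"
    and xB: "x \<in> BRrho R \<rho>" and sol: "solves_N M Z J I N x X"
    and \<alpha>: "\<alpha> > 1" and R: "R > 0" and \<rho>: "\<rho> > 0" and L: "L \<ge> 1"
    and weight: "\<And>F i. finite F \<Longrightarrow> (\<Sum>j\<in>F. a j i * (L + l1norm j) powr \<rho>) \<le> (eta a + 1/2) * (L + l1norm i) powr \<rho>"
    and i: "i \<in> GammaN N" and T0: "T \<ge> 0"
  shows "(\<integral>\<^sup>+\<omega>. ennreal \<bar>X i T \<omega>\<bar> \<partial>M)
     \<le> ennreal (exp ((1 + eta a) * T) * (2 * (1 + eta a) * ((R + 2 + 2 * noise_const \<alpha> * T) * (L + l1norm i) powr \<rho>)))"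
proof -
  have [measurable]: "Z j t \<in> borel_measurable M" for j t using stable_family_measurable[OF sf] by blast
  define lam where "lam = 1 + eta a"
  have lam: "lam > 0" and eta0: "eta a \<ge> 0" unfolding lam_def using A1_eta_nonneg[OF A] by auto
  define c where "c j i = a j i / lam" for j i
  have c0: "c j i \<ge> 0" for j i unfolding c_def using A1_coeff(1)[OF A] lam by simp
  define W where "W j = (L + l1norm j) powr \<rho>" for j :: "'d \<Rightarrow> int"
  have W0: "W j \<ge> 0" for j unfolding W_def by simp
  define \<beta> where "\<beta> = R + 2 + 2 * noise_const \<alpha> * T"
  have \<beta>: "\<beta> \<ge> 0" unfolding \<beta>_def using R noise_const_nonneg[OF \<alpha>] T0 by simp
  define B where "B = comparison_data x Z (GammaN N) T"
  have cw: "(\<Sum>j\<in>GammaN N. c j i' * W j) \<le> ((eta a + 1/2) / lam) * W i'" for i'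
    using weight[OF finite_GammaN, of i'] lam unfolding c_def W_def
    by (simp add: sum_divide_distrib[symmetric] divide_right_mono)
  have "(\<integral>\<^sup>+\<omega>. ennreal \<bar>X i T \<omega>\<bar> \<partial>M)
      \<le> (\<integral>\<^sup>+\<omega>. ennreal (exp (lam * T)) * (\<Sum>n. kernel_iter_enn (GammaN N) c n (\<lambda>j. B j \<omega>) i) \<partial>M)"
    using truncated_pathwise_bound_AE[OF sf A Jc sol \<alpha> i T0]
    unfolding lam_def c_def B_def by (rule nn_integral_mono_AE)
  also have "\<dots> = ennreal (exp (lam * T)) * (\<integral>\<^sup>+\<omega>. (\<Sum>n. kernel_iter_enn (GammaN N) c n (\<lambda>j. B j \<omega>) i) \<partial>M)"
  proof -
    have "(\<lambda>\<omega>. kernel_iter_enn (GammaN N) c n (\<lambda>j. B j \<omega>) i) \<in> borel_measurable M" for n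
      unfolding B_def by (rule kernel_iter_enn_meas) (rule comparison_data_measurable, simp)
    then show ?thesis by (intro nn_integral_cmult borel_measurable_suminf) auto
  qed
  also have "\<dots> \<le> ennreal (exp (lam * T)) * ennreal (\<beta> * W i / (1 - (eta a + 1/2) / lam))"
    unfolding B_def \<beta>_def W_def using W0 \<beta> eta0 lam
    by (intro mult_left_mono expected_kernel_series[OF finite_GammaN c0 _ _ _ _ cw[unfolded W_def]]
        expected_comparison_data[OF sf \<alpha> T0 xB R \<rho> L]) (auto simp: lam_def divide_less_eq \<beta>_def)
  also have "1 - (eta a + 1/2) / lam = 1 / (2 * lam)" using eta0 unfolding lam_def by (simp add: field_simps)
  also have "ennreal (exp (lam * T)) * ennreal (\<beta> * W i / (1 / (2 * lam)))
      = ennreal (exp (lam * T) * (2 * lam * (\<beta> * W i)))"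
    by (simp add: ennreal_mult'[symmetric] ac_simps)
  finally show ?thesis unfolding \<beta>_def W_def lam_def .
qed

lemma weight_le_poly:
  fixes L x \<rho> :: real assumes L1: "L \<ge> 1" and x0: "x \<ge> 0" and r0: "\<rho> > 0"
  shows "(L + x) powr \<rho> \<le> (2 * L) powr \<rho> * (1 + x powr \<rho>)"
proof (cases "x \<le> 1")
  case True
  then have "(L + x) powr \<rho> \<le> (2 * L) powr \<rho>" using L1 x0 r0 by (intro powr_mono2) auto
  also have "\<dots> \<le> (2 * L) powr \<rho> * (1 + x powr \<rho>)"
    using mult_left_mono[of 1 "1 + x powr \<rho>" "(2 * L) powr \<rho>"] by simp
  finally show ?thesis .
next
  case False
  have h1: "L * 1 \<le> L * x" using L1 False by (intro mult_left_mono) auto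
  have h2: "1 * x \<le> L * x" using L1 False by (intro mult_right_mono) auto
  have "L + x \<le> (2 * L) * x" using h1 h2 by linarith
  then have "(L + x) powr \<rho> \<le> ((2 * L) * x) powr \<rho>" using L1 x0 r0 by (intro powr_mono2) auto
  also have "\<dots> = (2 * L) powr \<rho> * x powr \<rho>" using L1 x0 by (simp add: powr_mult)
  also have "\<dots> \<le> (2 * L) powr \<rho> * (1 + x powr \<rho>)" by (intro mult_left_mono) auto
  finally show ?thesis .
qed

lemma moment_bound_polynomial_form:
  fixes \<eta> K R L t n \<rho> :: real
  assumes \<eta>: "\<eta> \<ge> 0" and K: "K \<ge> 0" and R: "R > 0" and t: "t \<ge> 0" and L: "L \<ge> 1"
    and n: "n \<ge> 0" and \<rho>: "\<rho> > 0"
  shows "exp ((1 + \<eta>) * t) * (2 * (1 + \<eta>) * ((R + 2 + 2 * K * t) * (L + n) powr \<rho>))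
    \<le> 2 * (1 + \<eta>) * (2 * L) powr \<rho> * (R + 2 + 2 * K) * (1 + n powr \<rho>) * (1 + t) * exp ((1 + \<eta>) * t)"
proof -
  have "R + 2 + 2 * K * t \<le> (R + 2 + 2 * K) * (1 + t)"
    using R K t by (simp add: algebra_simps)
  moreover have "(L + n) powr \<rho> \<le> (2 * L) powr \<rho> * (1 + n powr \<rho>)"
    by (rule weight_le_poly[OF L n \<rho>])
  ultimately have "(R + 2 + 2 * K * t) * (L + n) powr \<rho> \<le> (R + 2 + 2 * K) * (1 + t) * ((2 * L) powr \<rho> * (1 + n powr \<rho>))"
    using R K t by (intro mult_mono) auto
  then have "2 * (1 + \<eta>) * ((R + 2 + 2 * K * t) * (L + n) powr \<rho>)
      \<le> 2 * (1 + \<eta>) * ((R + 2 + 2 * K) * (1 + t) * ((2 * L) powr \<rho> * (1 + n powr \<rho>)))"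
    using \<eta> by (intro mult_left_mono) auto
  then show ?thesis by (simp add: ac_simps)
qed

theorem proposition3p1:
  fixes \<alpha> R \<rho> \<eta> :: real
  assumes "1 < \<alpha>" and "\<alpha> \<le> 2" and "R > 0" and "\<rho> > 0"
  shows "\<exists>C. \<forall>(M :: 'w measure) (Z :: ('d::finite \<Rightarrow> int) \<Rightarrow> real \<Rightarrow> 'w \<Rightarrow> real)
               a I J \<kappa> \<kappa>' N x X.
     stable_family M \<alpha> Z \<and> A1 a I \<and> A2 J \<kappa> \<kappa>' \<and> eta a = \<eta> \<and>
     x \<in> BRrho R \<rho> \<and> solves_N M Z J I N x X \<longrightarrow>
     (\<forall>i\<in>GammaN N. \<forall>t\<ge>0.
        (\<integral>\<^sup>+ \<omega>. ennreal \<bar>X i t \<omega>\<bar> \<partial>M)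
          \<le> ennreal (C * (1 + l1norm i powr \<rho>) * (1 + t) * exp ((1 + \<eta>) * t)))"
proof -
  have \<alpha>: "\<alpha> > 1" and R: "R > 0" and \<rho>: "\<rho> > 0" using assms by auto
  obtain L where L: "L \<ge> 1" and weight: "\<forall>(a :: ('d \<Rightarrow> int) \<Rightarrow> ('d \<Rightarrow> int) \<Rightarrow> real) I. A1 a I \<longrightarrow>
    (\<forall>F i. finite F \<longrightarrow> (\<Sum>j\<in>F. a j i * (L + l1norm j) powr \<rho>) \<le> (eta a + 1/2) * (L + l1norm i) powr \<rho>)"
    using A1_polynomial_weight[OF \<rho>] by blast
  define C where "C = 2 * (1 + \<eta>) * (2 * L) powr \<rho> * (R + 2 + 2 * noise_const \<alpha>)"
  show ?thesis
  proof (intro exI[of _ C] allI impI ballI)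
    fix M :: "'w measure" and Z :: "('d \<Rightarrow> int) \<Rightarrow> real \<Rightarrow> 'w \<Rightarrow> real"
      and a I J \<kappa> \<kappa>' N x X and i :: "'d \<Rightarrow> int" and t :: real
    assume hyps: "stable_family M \<alpha> Z \<and> A1 a I \<and> A2 J \<kappa> \<kappa>' \<and> eta a = \<eta> \<and>
      x \<in> BRrho R \<rho> \<and> solves_N M Z J I N x X" and i: "i \<in> GammaN N" and t: "t \<ge> 0"
    then have A: "A1 a I" and \<eta>: "eta a = \<eta>" by auto
    have weight_a: "(\<Sum>j\<in>F. a j i' * (L + l1norm j) powr \<rho>) \<le> (eta a + 1/2) * (L + l1norm i') powr \<rho>"
      if "finite F" for F i' using weight A that by blast
    have "(\<integral>\<^sup>+\<omega>. ennreal \<bar>X i t \<omega>\<bar> \<partial>M) \<le> ennreal (exp ((1 + \<eta>) * t) *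
        (2 * (1 + \<eta>) * ((R + 2 + 2 * noise_const \<alpha> * t) * (L + l1norm i) powr \<rho>)))"
      unfolding \<eta>[symmetric] using hyps
      by (intro truncated_moment_bound[OF _ A _ _ _ \<alpha> R \<rho> L weight_a i t]) auto
    also have "\<dots> \<le> ennreal (C * (1 + l1norm i powr \<rho>) * (1 + t) * exp ((1 + \<eta>) * t))"
      unfolding C_def using A1_eta_nonneg[OF A] noise_const_nonneg[OF \<alpha>] R t L l1norm_nonneg \<rho> \<eta>
      by (intro ennreal_leI moment_bound_polynomial_form) auto
    finally show "(\<integral>\<^sup>+\<omega>. ennreal \<bar>X i t \<omega>\<bar> \<partial>M) \<le> ennreal (C * (1 + l1norm i powr \<rho>) * (1 + t) * exp ((1 + \<eta>) * t))" .
  qed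
qed

end
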